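(* Let $\Bbbk$ be an algebraically closed field, $L,G$ finite groups with $L$ acting on $G$ by automorphisms, and $H=(\Bbbk G)^*\#^\tau_\sigma L$ a (quasi-)Hopf algebra of the form described in the context. Let $g_1,\dots,g_t$ represent the $L$-orbits on $G$, $L_i=L_{g_i}$, $\sigma_i=\sigma_{g_i}$. Let $V$ be a $\Bbbk_{\sigma_i}L_i$-module and $W$ a $\Bbbk_{\sigma_j}L_j$-module (not necessarily simple), and $\widehat V,\widehat W$ the corresponding $H$-modules. Then as $H$-modules $$\widehat V\otimes\widehat W\cong\bigoplus_{x\in D}\widehat{U(x)},$$ where $D$ is a set of representatives of the double cosets $L_i\backslash L/L_j$ and $U(x)$ is the $\Bbbk_{\sigma_{g_i({}^xg_j)}}L_{g_i({}^xg_j)}$-module $$U(x)=\Big(V\!\downarrow^{L_i}_{L_i\cap{}^xL_j}\otimes{}^xW\!\downarrow^{{}^xL_j}_{L_i\cap{}^xL_j}\Big)\Big\uparrow^{L_{g_i({}^xg_j)}}_{L_i\cap{}^xL_j}.$$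
   Context: $(\Bbbk G)^*$ has basis $p_g$ with $p_g(h)=\delta_{g,h}$ and $L$-action ${}^xp_g=p_{{}^xg}$. Maps $\sigma:L\times L\to((\Bbbk G)^* )^\times$ and $\tau:L\to((\Bbbk G)^* )^\times\otimes((\Bbbk G)^* )^\times$ are written $\sigma(x,y)=\sum_g\sigma_g(x,y)p_g$, $\tau(x)=\sum_{g,h}\tau_{g,h}(x)p_g\otimes p_h$ with scalars $\sigma_g(x,y),\tau_{g,h}(x)\in\Bbbk^\times$. As an algebra $H$ has basis $p_g\overline{x}$ ($g\in G,x\in L$) with $(p_g\overline{x})(p_h\overline{y})=\delta_{g,{}^xh}\sigma_g(x,y)p_g\overline{xy}$; its coproduct is $\Delta(p_g\overline{x})=\sum_{hk=g}\tau_{h,k}(x)\,p_h\overline{x}\otimes p_k\overline{x}$, and $\sigma,\tau$ are assumed to satisfy the conditions making $H$ a (quasi-)Hopf algebra; in particular $\Delta$ is an algebra map, which gives $\sigma_g(x,y)\sigma_h(x,y)=\sigma_{gh}(x,y)\tau_{g,h}(x)^{-1}\tau_{g,h}(y)^{-1}\tau_{g,h}(xy)$ for $x,y\in L_g\cap L_h$. Tensor products of $H$-modules use $\Delta$. $L_g$ is the stabilizer of $g$; $\Bbbk_{\sigma_g}L_g$ is the twisted group algebra (basis $\overline{x}$, $x\in L_g$, $\overline{x}\,\overline{y}=\sigma_g(x,y)\overline{xy}$). For $g\in G$ and a $\Bbbk_{\sigma_g}L_g$-module $U$, $\widehat U=H\otimes_{H_g}(p_g\otimes U)$ with $H_g=(\Bbbk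 G)^*\#_\sigma L_g$ acting on $p_g\otimes U$ by $(p_h\overline{x})(p_g\otimes u)=\delta_{g,h}p_g\otimes\overline{x}u$. ${}^xW$ is the $\Bbbk_{\sigma_{{}^xg_j}}L_{{}^xg_j}$-module (note ${}^xL_j=L_{{}^xg_j}$) obtained from $W$ via the algebra isomorphism $p_{g_j}\overline{L_j}\to p_{{}^xg_j}\overline{L_{{}^xg_j}}$ given by conjugation by $\overline{x}$ in $H$. $\downarrow$ denotes restriction and $\uparrow$ induction (tensoring up) along twisted group subalgebras. For $g=g_i$, $h={}^xg_j$, the tensor product of a $\Bbbk_{\sigma_g}(L_g\cap L_h)$-module and a $\Bbbk_{\sigma_h}(L_g\cap L_h)$-module is a $\Bbbk_{\sigma_g\sigma_h}(L_g\cap L_h)$-module via $\overline{y}(v\otimes w)=\overline{y}v\otimes\overline{y}w$, and is regarded as a $\Bbbk_{\sigma_{gh}}(L_g\cap L_h)$-module via the algebra isomorphism $\psi:\Bbbk_{\sigma_{gh}}(L_g\cap L_h)\to\Bbbk_{\sigma_g\sigma_h}(L_g\cap L_h)$, $\psi(\overline{y})=\tau_{g,h}(y)\overline{y}$, before inducing to $L_{gh}$ (note $L_g\cap L_h\le L_{gh}$). *)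

theory Defs
  imports "HOL-Algebra.Coset" "HOL-Computational_Algebra.Polynomial"
begin

text \<open>A k-vector space is represented by a basis set B; its vectors are the finitely
supported functions B \<Rightarrow> k (every vector space has a basis, so this is no loss of
generality; the basis may be infinite).\<close>

definition fsp :: "'b set \<Rightarrow> ('b \<Rightarrow> 'k::field) set" where
  "fsp B = {v. finite {b. v b \<noteq> 0} \<and> (\<forall>b. v b \<noteq> 0 \<longrightarrow> b \<in> B)}"

definition smul :: "'k::field \<Rightarrow> ('b \<Rightarrow> 'k) \<Rightarrow> ('b \<Rightarrow> 'k)" where
  "smul c v = (\<lambda>b. c * v b)"

definition dl :: "'b \<Rightarrow> ('b \<Rightarrow> 'k::field)" where
  "dl b = (\<lambda>b'. if b' = b then 1 else 0)"

definition linext :: "('b \<Rightarrow> ('c \<Rightarrow> 'k::field)) \<Rightarrow> ('b \<Rightarrow> 'k) \<Rightarrow> ('c \<Rightarrow> 'k)" where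
  "linext F v = (\<lambda>y. \<Sum>b\<in>{b. v b \<noteq> 0}. v b * F b y)"

definition lin :: "'b set \<Rightarrow> 'c set \<Rightarrow> (('b \<Rightarrow> 'k::field) \<Rightarrow> ('c \<Rightarrow> 'k)) \<Rightarrow> bool" where
  "lin B C f \<longleftrightarrow> (\<forall>v\<in>fsp B. f v \<in> fsp C) \<and>
     (\<forall>u\<in>fsp B. \<forall>v\<in>fsp B. f (\<lambda>b. u b + v b) = (\<lambda>c. f u c + f v c)) \<and>
     (\<forall>a. \<forall>v\<in>fsp B. f (smul a v) = smul a (f v))"

definition vt :: "('b \<Rightarrow> 'k::field) \<Rightarrow> ('c \<Rightarrow> 'k) \<Rightarrow> ('b \<times> 'c \<Rightarrow> 'k)" where
  "vt u w = (\<lambda>(b, c). u b * w c)"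

text \<open>embedding of a vector of U as the vector r \<otimes> u in a space with basis R \<times> B\<close>
definition emb :: "'r \<Rightarrow> ('b \<Rightarrow> 'k::field) \<Rightarrow> ('r \<times> 'b \<Rightarrow> 'k)" where
  "emb r v = (\<lambda>(r', b). if r' = r then v b else 0)"

definition stab :: "'l monoid \<Rightarrow> ('l \<Rightarrow> 'g \<Rightarrow> 'g) \<Rightarrow> 'g \<Rightarrow> 'l set" where
  "stab L act g = {x \<in> carrier L. act x g = g}"

definition ltrans :: "'l monoid \<Rightarrow> 'l set \<Rightarrow> 'l set \<Rightarrow> 'l set" where
  "ltrans L T S = (SOME R. R \<subseteq> T \<and> (\<forall>t\<in>T. \<exists>!r\<in>R. t \<in> r <#\<^bsub>L\<^esub> S))"

definition lrep :: "'l monoid \<Rightarrow> 'l set \<Rightarrow> 'l set \<Rightarrow> 'l \<Rightarrow> 'l" where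
  "lrep L T S t = (THE r. r \<in> ltrans L T S \<and> t \<in> r <#\<^bsub>L\<^esub> S)"

definition dcoset :: "'l monoid \<Rightarrow> 'l set \<Rightarrow> 'l \<Rightarrow> 'l set \<Rightarrow> 'l set" where
  "dcoset L A x B = {a \<otimes>\<^bsub>L\<^esub> x \<otimes>\<^bsub>L\<^esub> b | a b. a \<in> A \<and> b \<in> B}"

definition dcoset_reps :: "'l monoid \<Rightarrow> 'l set \<Rightarrow> 'l set \<Rightarrow> 'l set \<Rightarrow> bool" where
  "dcoset_reps L A B D \<longleftrightarrow> D \<subseteq> carrier L \<and> (\<forall>y\<in>carrier L. \<exists>!x\<in>D. y \<in> dcoset L A x B)"

text \<open>Elements of H: functions on G \<times> L (coefficients w.r.t. the basis p_g xbar).\<close>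

definition pe :: "'g \<Rightarrow> 'l \<Rightarrow> ('g \<times> 'l \<Rightarrow> 'k::field)" where
  "pe g x = dl (g, x)"

definition Hmult :: "'g monoid \<Rightarrow> 'l monoid \<Rightarrow> ('l \<Rightarrow> 'g \<Rightarrow> 'g) \<Rightarrow> ('g \<Rightarrow> 'l \<Rightarrow> 'l \<Rightarrow> 'k::field)
    \<Rightarrow> ('g \<times> 'l \<Rightarrow> 'k) \<Rightarrow> ('g \<times> 'l \<Rightarrow> 'k) \<Rightarrow> ('g \<times> 'l \<Rightarrow> 'k)" where
  "Hmult G L act \<sigma> a b = (\<lambda>(g, z). \<Sum>x\<in>carrier L. \<Sum>h\<in>carrier G. \<Sum>y\<in>carrier L.
      if g \<in> carrier G \<and> g = act x h \<and> x \<otimes>\<^bsub>L\<^esub> y = z then a (g, x) * b (h, y) * \<sigma> g x y else 0)"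

definition Hone :: "'g monoid \<Rightarrow> 'l monoid \<Rightarrow> ('g \<times> 'l \<Rightarrow> 'k::field)" where
  "Hone G L = (\<lambda>(g, x). if g \<in> carrier G \<and> x = \<one>\<^bsub>L\<^esub> then 1 else 0)"

definition Helts :: "'g monoid \<Rightarrow> 'l monoid \<Rightarrow> ('g \<times> 'l \<Rightarrow> 'k::field) set" where
  "Helts G L = {a. \<forall>p. a p \<noteq> 0 \<longrightarrow> p \<in> carrier G \<times> carrier L}"

text \<open>xbar = sum_g p_g xbar\<close>
definition xbar :: "'g monoid \<Rightarrow> 'l \<Rightarrow> ('g \<times> 'l \<Rightarrow> 'k::field)" where
  "xbar G x = (\<lambda>(g, y). if g \<in> carrier G \<and> y = x then 1 else 0)"

definition Hinv :: "'g monoid \<Rightarrow> 'l monoid \<Rightarrow> ('l \<Rightarrow> 'g \<Rightarrow> 'g) \<Rightarrow> ('g \<Rightarrow> 'l \<Rightarrow> 'l \<Rightarrow> 'k::field)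
    \<Rightarrow> ('g \<times> 'l \<Rightarrow> 'k) \<Rightarrow> ('g \<times> 'l \<Rightarrow> 'k)" where
  "Hinv G L act \<sigma> a = (THE b. b \<in> Helts G L \<and> Hmult G L act \<sigma> a b = Hone G L \<and> Hmult G L act \<sigma> b a = Hone G L)"

definition Hconj :: "'g monoid \<Rightarrow> 'l monoid \<Rightarrow> ('l \<Rightarrow> 'g \<Rightarrow> 'g) \<Rightarrow> ('g \<Rightarrow> 'l \<Rightarrow> 'l \<Rightarrow> 'k::field)
    \<Rightarrow> 'l \<Rightarrow> ('g \<times> 'l \<Rightarrow> 'k) \<Rightarrow> ('g \<times> 'l \<Rightarrow> 'k)" where
  "Hconj G L act \<sigma> x a = Hmult G L act \<sigma> (Hmult G L act \<sigma> (xbar G x) a) (Hinv G L act \<sigma> (xbar G x))"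

text \<open>A module over the twisted group algebra k_c S (S \<subseteq> L), on the space with basis B.\<close>
definition tw_mod :: "'l monoid \<Rightarrow> 'l set \<Rightarrow> ('l \<Rightarrow> 'l \<Rightarrow> 'k::field) \<Rightarrow> 'b set
    \<Rightarrow> ('l \<Rightarrow> ('b \<Rightarrow> 'k) \<Rightarrow> ('b \<Rightarrow> 'k)) \<Rightarrow> bool" where
  "tw_mod L S c B \<rho> \<longleftrightarrow> (\<forall>y\<in>S. lin B B (\<rho> y)) \<and>
     (\<forall>y\<in>S. \<forall>z\<in>S. \<forall>v\<in>fsp B. \<rho> y (\<rho> z v) = smul (c y z) (\<rho> (y \<otimes>\<^bsub>L\<^esub> z) v)) \<and>
     (\<forall>v\<in>fsp B. \<rho> \<one>\<^bsub>L\<^esub> v = v)"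

text \<open>An H-module: rho g x is the action of the basis element p_g xbar.\<close>
definition H_mod :: "'g monoid \<Rightarrow> 'l monoid \<Rightarrow> ('l \<Rightarrow> 'g \<Rightarrow> 'g) \<Rightarrow> ('g \<Rightarrow> 'l \<Rightarrow> 'l \<Rightarrow> 'k::field)
    \<Rightarrow> 'b set \<Rightarrow> ('g \<Rightarrow> 'l \<Rightarrow> ('b \<Rightarrow> 'k) \<Rightarrow> ('b \<Rightarrow> 'k)) \<Rightarrow> bool" where
  "H_mod G L act \<sigma> B \<rho> \<longleftrightarrow> (\<forall>g\<in>carrier G. \<forall>x\<in>carrier L. lin B B (\<rho> g x)) \<and>
     (\<forall>g\<in>carrier G. \<forall>x\<in>carrier L. \<forall>h\<in>carrier G. \<forall>y\<in>carrier L. \<forall>v\<in>fsp B.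
        \<rho> g x (\<rho> h y v) = (if g = act x h then smul (\<sigma> g x y) (\<rho> g (x \<otimes>\<^bsub>L\<^esub> y) v) else (\<lambda>_. 0))) \<and>
     (\<forall>v\<in>fsp B. (\<lambda>b. \<Sum>g\<in>carrier G. \<rho> g \<one>\<^bsub>L\<^esub> v b) = v)"

definition H_iso :: "'g monoid \<Rightarrow> 'l monoid \<Rightarrow> 'b set \<Rightarrow> ('g \<Rightarrow> 'l \<Rightarrow> ('b \<Rightarrow> 'k::field) \<Rightarrow> ('b \<Rightarrow> 'k))
    \<Rightarrow> 'c set \<Rightarrow> ('g \<Rightarrow> 'l \<Rightarrow> ('c \<Rightarrow> 'k) \<Rightarrow> ('c \<Rightarrow> 'k)) \<Rightarrow> bool" where
  "H_iso G L B1 \<rho>1 B2 \<rho>2 \<longleftrightarrow> (\<exists>f. lin B1 B2 f \<and> bij_betw f (fsp B1) (fsp B2) \<and>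
     (\<forall>g\<in>carrier G. \<forall>x\<in>carrier L. \<forall>v\<in>fsp B1. f (\<rho>1 g x v) = \<rho>2 g x (f v)))"

definition tensH_basis :: "'b set \<Rightarrow> 'c set \<Rightarrow> ('b \<times> 'c) set" where
  "tensH_basis B C = B \<times> C"

text \<open>Delta(p_g xbar) = sum_{hk=g} tau_{h,k}(x) p_h xbar \<otimes> p_k xbar\<close>
definition tensH :: "'g monoid \<Rightarrow> ('g \<Rightarrow> 'g \<Rightarrow> 'l \<Rightarrow> 'k::field)
    \<Rightarrow> ('g \<Rightarrow> 'l \<Rightarrow> ('b \<Rightarrow> 'k) \<Rightarrow> ('b \<Rightarrow> 'k)) \<Rightarrow> ('g \<Rightarrow> 'l \<Rightarrow> ('c \<Rightarrow> 'k) \<Rightarrow> ('c \<Rightarrow> 'k))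
    \<Rightarrow> ('g \<Rightarrow> 'l \<Rightarrow> ('b \<times> 'c \<Rightarrow> 'k) \<Rightarrow> ('b \<times> 'c \<Rightarrow> 'k))" where
  "tensH G \<tau> \<rho>1 \<rho>2 g x = linext (\<lambda>(b, c). (\<lambda>p. \<Sum>h\<in>carrier G. \<Sum>k\<in>carrier G.
      if h \<otimes>\<^bsub>G\<^esub> k = g then \<tau> h k x * vt (\<rho>1 h x (dl b)) (\<rho>2 k x (dl c)) p else 0))"

subsection \<open>The induced H-module  hat U = H \<otimes>_{H_g} (p_g \<otimes> U)\<close>

text \<open>Realised on the standard basis {p_{r g} rbar \<otimes> (p_g \<otimes> u)}, r running over the chosen
  representatives R of L / L_g and u over the basis of U.  The action of p_h xbar is obtained by
  computing (p_h xbar)(p_{r g} rbar) in H and rewriting p_h (xr)bar, with x r = r' s (r' in R,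
  s in L_g), as a multiple of (p_h r'bar)(p_g sbar), using the multiplication of H.\<close>

definition indH_basis :: "'l monoid \<Rightarrow> ('l \<Rightarrow> 'g \<Rightarrow> 'g) \<Rightarrow> 'g \<Rightarrow> 'u set \<Rightarrow> ('l \<times> 'u) set" where
  "indH_basis L act g BU = ltrans L (carrier L) (stab L act g) \<times> BU"

definition indH :: "'g monoid \<Rightarrow> 'l monoid \<Rightarrow> ('l \<Rightarrow> 'g \<Rightarrow> 'g) \<Rightarrow> ('g \<Rightarrow> 'l \<Rightarrow> 'l \<Rightarrow> 'k::field)
    \<Rightarrow> 'g \<Rightarrow> ('l \<Rightarrow> ('u \<Rightarrow> 'k) \<Rightarrow> ('u \<Rightarrow> 'k))
    \<Rightarrow> ('g \<Rightarrow> 'l \<Rightarrow> ('l \<times> 'u \<Rightarrow> 'k) \<Rightarrow> ('l \<times> 'u \<Rightarrow> 'k))" where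
  "indH G L act \<sigma> g \<rho>U h x = linext (\<lambda>(r, u).
     (let Lg = stab L act g;
          r' = lrep L (carrier L) Lg (x \<otimes>\<^bsub>L\<^esub> r);
          s = inv\<^bsub>L\<^esub> r' \<otimes>\<^bsub>L\<^esub> (x \<otimes>\<^bsub>L\<^esub> r);
          a = Hmult G L act \<sigma> (pe h x) (pe (act r g) r) (h, x \<otimes>\<^bsub>L\<^esub> r);
          \<mu> = Hmult G L act \<sigma> (pe h r') (pe g s) (h, x \<otimes>\<^bsub>L\<^esub> r)
      in if h = act (x \<otimes>\<^bsub>L\<^esub> r) g then smul (a / \<mu>) (emb r' (\<rho>U s (dl u))) else (\<lambda>_. 0)))"

text \<open>Conjugate module  xW  (a k_{sigma_{x g}} L_{x g}-module) of a k_{sigma_g} L_g-module W,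
  via the isomorphism p_g L_g-bar \<rightarrow> p_{x g} L_{x g}-bar given by conjugation by xbar in H:
  z acts as Hconj^{-1}(p_{xg} zbar) = (1/lambda) p_g ybar, y = x^{-1} z x,
  where Hconj(p_g ybar) = lambda p_{xg} zbar.\<close>
definition conjmod :: "'g monoid \<Rightarrow> 'l monoid \<Rightarrow> ('l \<Rightarrow> 'g \<Rightarrow> 'g) \<Rightarrow> ('g \<Rightarrow> 'l \<Rightarrow> 'l \<Rightarrow> 'k::field)
    \<Rightarrow> 'l \<Rightarrow> 'g \<Rightarrow> ('l \<Rightarrow> ('c \<Rightarrow> 'k) \<Rightarrow> ('c \<Rightarrow> 'k)) \<Rightarrow> ('l \<Rightarrow> ('c \<Rightarrow> 'k) \<Rightarrow> ('c \<Rightarrow> 'k))" where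
  "conjmod G L act \<sigma> x g \<rho>W z w =
     (let y = inv\<^bsub>L\<^esub> x \<otimes>\<^bsub>L\<^esub> z \<otimes>\<^bsub>L\<^esub> x;
          lam = Hconj G L act \<sigma> x (pe g y) (act x g, z)
      in smul (inverse lam) (\<rho>W y w))"

text \<open>Tensor product of a k_{sigma_g}I-module and a k_{sigma_h}I-module, regarded as a
  k_{sigma_{gh}}I-module via psi(ybar) = tau_{g,h}(y) ybar.\<close>
definition tens_psi :: "('g \<Rightarrow> 'g \<Rightarrow> 'l \<Rightarrow> 'k::field) \<Rightarrow> 'g \<Rightarrow> 'g
    \<Rightarrow> ('l \<Rightarrow> ('b \<Rightarrow> 'k) \<Rightarrow> ('b \<Rightarrow> 'k)) \<Rightarrow> ('l \<Rightarrow> ('c \<Rightarrow> 'k) \<Rightarrow> ('c \<Rightarrow> 'k))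
    \<Rightarrow> ('l \<Rightarrow> ('b \<times> 'c \<Rightarrow> 'k) \<Rightarrow> ('b \<times> 'c \<Rightarrow> 'k))" where
  "tens_psi \<tau> g h \<rho>1 \<rho>2 y = linext (\<lambda>(b, c). smul (\<tau> g h y) (vt (\<rho>1 y (dl b)) (\<rho>2 y (dl c))))"

text \<open>Induction  X \<up>^T_S = k_c T \<otimes>_{k_c S} X, on the basis {rbar \<otimes> u} (r in the chosen
  representatives of T / S):  tbar (rbar \<otimes> u) = c(t,r)/c(r',s) (r'bar \<otimes> sbar u), t r = r' s.\<close>
definition indT_basis :: "'l monoid \<Rightarrow> 'l set \<Rightarrow> 'l set \<Rightarrow> 'u set \<Rightarrow> ('l \<times> 'u) set" where
  "indT_basis L T S BX = ltrans L T S \<times> BX"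

definition indT :: "'l monoid \<Rightarrow> 'l set \<Rightarrow> 'l set \<Rightarrow> ('l \<Rightarrow> 'l \<Rightarrow> 'k::field)
    \<Rightarrow> ('l \<Rightarrow> ('u \<Rightarrow> 'k) \<Rightarrow> ('u \<Rightarrow> 'k)) \<Rightarrow> ('l \<Rightarrow> ('l \<times> 'u \<Rightarrow> 'k) \<Rightarrow> ('l \<times> 'u \<Rightarrow> 'k))" where
  "indT L T S c \<rho>X t = linext (\<lambda>(r, u).
     (let r' = lrep L T S (t \<otimes>\<^bsub>L\<^esub> r);
          s = inv\<^bsub>L\<^esub> r' \<otimes>\<^bsub>L\<^esub> (t \<otimes>\<^bsub>L\<^esub> r)
      in smul (c t r / c r' s) (emb r' (\<rho>X s (dl u)))))"

definition dsum_basis :: "'i set \<Rightarrow> ('i \<Rightarrow> 'e set) \<Rightarrow> ('i \<times> 'e) set" where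
  "dsum_basis D Bs = {(i, b). i \<in> D \<and> b \<in> Bs i}"

definition dsum :: "'i set \<Rightarrow> ('i \<Rightarrow> 'g \<Rightarrow> 'l \<Rightarrow> ('e \<Rightarrow> 'k::field) \<Rightarrow> ('e \<Rightarrow> 'k))
    \<Rightarrow> ('g \<Rightarrow> 'l \<Rightarrow> ('i \<times> 'e \<Rightarrow> 'k) \<Rightarrow> ('i \<times> 'e \<Rightarrow> 'k))" where
  "dsum D \<rho>s g x v = (\<lambda>(i, b). if i \<in> D then \<rho>s i g x (\<lambda>b'. v (i, b')) b else 0)"

definition Ux_basis :: "'g monoid \<Rightarrow> 'l monoid \<Rightarrow> ('l \<Rightarrow> 'g \<Rightarrow> 'g) \<Rightarrow> 'g \<Rightarrow> 'g \<Rightarrow> 'b set \<Rightarrow> 'c set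
    \<Rightarrow> 'l \<Rightarrow> ('l \<times> ('b \<times> 'c)) set" where
  "Ux_basis G L act gi gj BV BW x =
     (let h = act x gj in
      indT_basis L (stab L act (gi \<otimes>\<^bsub>G\<^esub> h)) (stab L act gi \<inter> stab L act h) (BV \<times> BW))"

definition Ux :: "'g monoid \<Rightarrow> 'l monoid \<Rightarrow> ('l \<Rightarrow> 'g \<Rightarrow> 'g) \<Rightarrow> ('g \<Rightarrow> 'l \<Rightarrow> 'l \<Rightarrow> 'k::field)
    \<Rightarrow> ('g \<Rightarrow> 'g \<Rightarrow> 'l \<Rightarrow> 'k) \<Rightarrow> 'g \<Rightarrow> 'g
    \<Rightarrow> ('l \<Rightarrow> ('b \<Rightarrow> 'k) \<Rightarrow> ('b \<Rightarrow> 'k)) \<Rightarrow> ('l \<Rightarrow> ('c \<Rightarrow> 'k) \<Rightarrow> ('c \<Rightarrow> 'k))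
    \<Rightarrow> 'l \<Rightarrow> ('l \<Rightarrow> ('l \<times> ('b \<times> 'c) \<Rightarrow> 'k) \<Rightarrow> ('l \<times> ('b \<times> 'c) \<Rightarrow> 'k))" where
  "Ux G L act \<sigma> \<tau> gi gj \<rho>V \<rho>W x =
     (let h = act x gj in
      indT L (stab L act (gi \<otimes>\<^bsub>G\<^esub> h)) (stab L act gi \<inter> stab L act h) (\<sigma> (gi \<otimes>\<^bsub>G\<^esub> h))
        (tens_psi \<tau> gi h \<rho>V (conjmod G L act \<sigma> x gj \<rho>W)))"

definition alg_closed_field :: "'k::field itself \<Rightarrow> bool" where
  "alg_closed_field _ \<longleftrightarrow> (\<forall>p :: 'k poly. degree p > 0 \<longrightarrow> (\<exists>z. poly p z = 0))"

definition act_by_auts :: "'g monoid \<Rightarrow> 'l monoid \<Rightarrow> ('l \<Rightarrow> 'g \<Rightarrow> 'g) \<Rightarrow> bool" where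
  "act_by_auts G L act \<longleftrightarrow>
     (\<forall>x\<in>carrier L. act x \<in> hom G G \<and> bij_betw (act x) (carrier G) (carrier G)) \<and>
     (\<forall>x\<in>carrier L. \<forall>y\<in>carrier L. \<forall>g\<in>carrier G. act (x \<otimes>\<^bsub>L\<^esub> y) g = act x (act y g)) \<and>
     (\<forall>g\<in>carrier G. act \<one>\<^bsub>L\<^esub> g = g)"

text \<open>Conditions on sigma, tau: H is an associative unital algebra (normalised twisted cocycle)
  and Delta is a unital algebra map.\<close>
definition crossed_data :: "'g monoid \<Rightarrow> 'l monoid \<Rightarrow> ('l \<Rightarrow> 'g \<Rightarrow> 'g)
    \<Rightarrow> ('g \<Rightarrow> 'l \<Rightarrow> 'l \<Rightarrow> 'k::field) \<Rightarrow> ('g \<Rightarrow> 'g \<Rightarrow> 'l \<Rightarrow> 'k) \<Rightarrow> bool" where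
  "crossed_data G L act \<sigma> \<tau> \<longleftrightarrow>
     (\<forall>g\<in>carrier G. \<forall>x\<in>carrier L. \<forall>y\<in>carrier L. \<sigma> g x y \<noteq> 0) \<and>
     (\<forall>g\<in>carrier G. \<forall>h\<in>carrier G. \<forall>x\<in>carrier L. \<tau> g h x \<noteq> 0) \<and>
     (\<forall>g\<in>carrier G. \<forall>x\<in>carrier L. \<sigma> g \<one>\<^bsub>L\<^esub> x = 1 \<and> \<sigma> g x \<one>\<^bsub>L\<^esub> = 1) \<and>
     (\<forall>g\<in>carrier G. \<forall>x\<in>carrier L. \<forall>y\<in>carrier L. \<forall>z\<in>carrier L.
        \<sigma> g x y * \<sigma> g (x \<otimes>\<^bsub>L\<^esub> y) z = \<sigma> (act (inv\<^bsub>L\<^esub> x) g) y z * \<sigma> g x (y \<otimes>\<^bsub>L\<^esub> z)) \<and>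
     (\<forall>g\<in>carrier G. \<forall>h\<in>carrier G. \<tau> g h \<one>\<^bsub>L\<^esub> = 1) \<and>
     (\<forall>g\<in>carrier G. \<forall>h\<in>carrier G. \<forall>x\<in>carrier L. \<forall>y\<in>carrier L.
        \<sigma> g x y * \<sigma> h x y * \<tau> g h x * \<tau> (act (inv\<^bsub>L\<^esub> x) g) (act (inv\<^bsub>L\<^esub> x) h) y
          = \<sigma> (g \<otimes>\<^bsub>G\<^esub> h) x y * \<tau> g h (x \<otimes>\<^bsub>L\<^esub> y))"

end

theory Submission
  imports Defs "HOL-Algebra.Left_Coset"
begin

text \<open>Write \<open>l \<otimes> a\<close> for \<open>p\<^bsub>l g\<^esub> lbar \<otimes> (p\<^sub>g \<otimes> a)\<close> in an induced module \<open>hat U\<close>. A family of linear maps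
  \<open>\<Phi>\<^sub>l\<close> (\<open>l \<in> L\<close>) into an H-module that transforms like \<open>l \<otimes> -\<close> under the basis elements \<open>p\<^sub>k ybar\<close>
  of H and under \<open>L\<^sub>g\<close> defines an H-map out of \<open>hat U\<close> (Frobenius reciprocity), and such families
  can be induced in stages. For a double coset representative \<open>x\<close> the vectors
  \<open>lbar (v \<otimes> xbar w)\<close> of \<open>hat V \<otimes> hat W\<close> form such a family for \<open>V\<down> \<otimes> \<^sup>xW\<down>\<close> over \<open>L\<^sub>i \<inter> \<^sup>xL\<^sub>j\<close>;
  inducing it to \<open>L\<^bsub>g\<^sub>i \<^sup>xg\<^sub>j\<^esub>\<close> gives an H-map \<open>hat U(x) \<rightarrow> hat V \<otimes> hat W\<close>, and summing over \<open>D\<close>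
  gives the isomorphism. It is bijective by Mackey's argument: \<open>(x, r, t) \<mapsto> (r t L\<^sub>i, r t x L\<^sub>j)\<close>, with
  \<open>r\<close>, \<open>t\<close> running over coset representatives of \<open>L / L\<^bsub>g\<^sub>i \<^sup>xg\<^sub>j\<^esub>\<close> and of
  \<open>L\<^bsub>g\<^sub>i \<^sup>xg\<^sub>j\<^esub> / (L\<^sub>i \<inter> \<^sup>xL\<^sub>j)\<close>, is a bijection onto pairs of cosets of \<open>L\<^sub>i\<close> and \<open>L\<^sub>j\<close>, and on
  corresponding blocks of basis vectors the map is an invertible twist by the module actions.\<close>

section \<open>Finitely supported vectors\<close>

definition fsp_linear :: "'b set \<Rightarrow> (('b \<Rightarrow> 'k::field) \<Rightarrow> ('c \<Rightarrow> 'k)) \<Rightarrow> bool" where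
  "fsp_linear B f \<longleftrightarrow> (\<forall>u\<in>fsp B. \<forall>v\<in>fsp B. f (\<lambda>b. u b + v b) = (\<lambda>c. f u c + f v c)) \<and>
     (\<forall>a. \<forall>v\<in>fsp B. f (smul a v) = smul a (f v))"

lemma lin_iff_fsp_linear: "lin B C f \<longleftrightarrow> fsp_linear B f \<and> (\<forall>v\<in>fsp B. f v \<in> fsp C)"
  by (auto simp: lin_def fsp_linear_def)

lemma lin_fsp_linear: "lin B C f \<Longrightarrow> fsp_linear B f"
  by (simp add: lin_iff_fsp_linear)

lemma lin_mem_fsp: "lin B C f \<Longrightarrow> v \<in> fsp B \<Longrightarrow> f v \<in> fsp C"
  by (simp add: lin_def)

lemma fsp_zero [simp]: "(\<lambda>_. 0) \<in> fsp B"
  by (simp add: fsp_def)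

lemma fsp_dl [simp]: "b \<in> B \<Longrightarrow> dl b \<in> fsp B"
  by (simp add: fsp_def dl_def)

lemma fsp_mono: "v \<in> fsp B \<Longrightarrow> B \<subseteq> C \<Longrightarrow> v \<in> fsp C"
  by (auto simp: fsp_def)

lemma fsp_add: "u \<in> fsp B \<Longrightarrow> v \<in> fsp B \<Longrightarrow> (\<lambda>b. u b + v b) \<in> fsp B"
  unfolding fsp_def
  by (auto intro: finite_subset[of _ "{b. u b \<noteq> 0} \<union> {b. v b \<noteq> 0}"])
    (metis add.right_neutral)

lemma fsp_smul: "v \<in> fsp B \<Longrightarrow> smul a v \<in> fsp B"
  unfolding fsp_def smul_def by (auto intro: finite_subset[of _ "{b. v b \<noteq> 0}"])

lemma fsp_sum: "finite S \<Longrightarrow> (\<And>i. i \<in> S \<Longrightarrow> u i \<in> fsp B) \<Longrightarrow> (\<lambda>b. \<Sum>i\<in>S. u i b) \<in> fsp B"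
  by (induction S rule: finite_induct) (auto intro: fsp_add[of "u _"])

lemma smul_zero [simp]: "smul a (\<lambda>_. 0) = (\<lambda>_. 0)"
  by (simp add: smul_def)

lemma smul_smul: "smul a (smul b v) = smul (a * b) v"
  by (simp add: smul_def mult.assoc)

lemma smul_one [simp]: "smul 1 v = v"
  by (simp add: smul_def)

lemma smul_0 [simp]: "smul 0 v = (\<lambda>_. 0)"
  by (simp add: smul_def)

lemma fsp_linear_add: "fsp_linear B f \<Longrightarrow> u \<in> fsp B \<Longrightarrow> v \<in> fsp B \<Longrightarrow> f (\<lambda>b. u b + v b) = (\<lambda>c. f u c + f v c)"
  by (simp add: fsp_linear_def)

lemma fsp_linear_smul: "fsp_linear B f \<Longrightarrow> v \<in> fsp B \<Longrightarrow> f (smul a v) = smul a (f v)"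
  by (simp add: fsp_linear_def)

lemma fsp_linear_zero: "fsp_linear B f \<Longrightarrow> f (\<lambda>_. 0) = (\<lambda>_. 0)"
  using fsp_linear_smul[of B f "\<lambda>_. 0" 0] by simp

lemma fsp_linear_sum:
  assumes f: "fsp_linear B f"
  shows "finite S \<Longrightarrow> (\<And>i. i \<in> S \<Longrightarrow> u i \<in> fsp B) \<Longrightarrow> f (\<lambda>b. \<Sum>i\<in>S. u i b) = (\<lambda>c. \<Sum>i\<in>S. f (u i) c)"
proof (induction S rule: finite_induct)
  case empty
  then show ?case by (simp add: fsp_linear_zero[OF f])
next
  case (insert i S)
  then have "f (\<lambda>b. u i b + (\<Sum>j\<in>S. u j b)) = (\<lambda>c. f (u i) c + f (\<lambda>b. \<Sum>j\<in>S. u j b) c)"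
    by (intro fsp_linear_add[OF f] fsp_sum) auto
  with insert show ?case by simp
qed

lemma fsp_linear_id: "fsp_linear B (\<lambda>v. v)"
  by (simp add: fsp_linear_def)

lemma fsp_linear_comp:
  "fsp_linear B f \<Longrightarrow> (\<And>v. v \<in> fsp B \<Longrightarrow> f v \<in> fsp C) \<Longrightarrow> fsp_linear C g \<Longrightarrow> fsp_linear B (\<lambda>v. g (f v))"
  unfolding fsp_linear_def by (auto intro: fsp_add fsp_smul)

lemma fsp_linear_scale: "fsp_linear B f \<Longrightarrow> fsp_linear B (\<lambda>v. smul c (f v))"
  unfolding fsp_linear_def by (auto simp: smul_def fun_eq_iff algebra_simps)

lemma fsp_linear_if: "fsp_linear B f \<Longrightarrow> fsp_linear B (\<lambda>v. if P then f v else (\<lambda>_. 0))"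
  unfolding fsp_linear_def by auto

lemma fsp_linear_if_scale: "fsp_linear B f \<Longrightarrow> fsp_linear B (\<lambda>a p. if P then c * f a p else 0)"
  unfolding fsp_linear_def by (auto simp: smul_def fun_eq_iff algebra_simps)

lemma fsp_linear_sum_fun:
  "finite I \<Longrightarrow> (\<And>i. i \<in> I \<Longrightarrow> fsp_linear B (F i)) \<Longrightarrow> fsp_linear B (\<lambda>v c. \<Sum>i\<in>I. F i v c)"
  unfolding fsp_linear_def by (auto simp: sum.distrib smul_def sum_distrib_left)

lemma sum_dl_eq: "finite S \<Longrightarrow> {b. v b \<noteq> 0} \<subseteq> S \<Longrightarrow> (\<lambda>y. \<Sum>b\<in>S. v b * dl b y) = v"
proof
  fix y assume S: "finite S" "{b. v b \<noteq> 0} \<subseteq> S"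
  have "(\<Sum>b\<in>S. v b * dl b y) = (\<Sum>b\<in>S. if b = y then v b else 0)"
    by (rule sum.cong) (auto simp: dl_def)
  also have "\<dots> = v y" using S by (auto simp: sum.delta')
  finally show "(\<Sum>b\<in>S. v b * dl b y) = v y" .
qed

lemma linext_eq_sum: "finite S \<Longrightarrow> {b. v b \<noteq> 0} \<subseteq> S \<Longrightarrow> linext F v = (\<lambda>y. \<Sum>b\<in>S. v b * F b y)"
  unfolding linext_def by (intro ext sum.mono_neutral_left) auto

lemma linext_dl [simp]: "linext F (dl b) = F b"
  using linext_eq_sum[of "{b}" "dl b" F] by (simp add: dl_def)

lemma fsp_linear_linext:
  fixes F :: "'b \<Rightarrow> 'c \<Rightarrow> 'k::field"
  shows "fsp_linear B (linext F)"
  unfolding fsp_linear_def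
proof (intro conjI ballI allI)
  fix u v :: "'b \<Rightarrow> 'k" assume u: "u \<in> fsp B" and v: "v \<in> fsp B"
  let ?S = "{b. u b \<noteq> 0} \<union> {b. v b \<noteq> 0}"
  have fin: "finite ?S" using u v by (simp add: fsp_def)
  have "linext F (\<lambda>b. u b + v b) = (\<lambda>y. \<Sum>b\<in>?S. (u b + v b) * F b y)"
    "linext F u = (\<lambda>y. \<Sum>b\<in>?S. u b * F b y)" "linext F v = (\<lambda>y. \<Sum>b\<in>?S. v b * F b y)"
    using fin by (intro linext_eq_sum; auto)+
  then show "linext F (\<lambda>b. u b + v b) = (\<lambda>c. linext F u c + linext F v c)"
    by (simp add: distrib_right sum.distrib)
next
  fix a and v :: "'b \<Rightarrow> 'k" assume "v \<in> fsp B"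
  then have "linext F (smul a v) = (\<lambda>y. \<Sum>b\<in>{b. v b \<noteq> 0}. smul a v b * F b y)"
    by (intro linext_eq_sum) (auto simp: fsp_def smul_def)
  then show "linext F (smul a v) = smul a (linext F v)"
    by (simp add: linext_def smul_def sum_distrib_left mult.assoc)
qed

lemma linext_mem_fsp: "(\<And>b. b \<in> B \<Longrightarrow> F b \<in> fsp C) \<Longrightarrow> v \<in> fsp B \<Longrightarrow> linext F v \<in> fsp C"
proof -
  assume F: "\<And>b. b \<in> B \<Longrightarrow> F b \<in> fsp C" and v: "v \<in> fsp B"
  have "linext F v = (\<lambda>y. \<Sum>b\<in>{b. v b \<noteq> 0}. smul (v b) (F b) y)"
    by (simp add: linext_def smul_def)
  also have "\<dots> \<in> fsp C"
    using v F by (intro fsp_sum fsp_smul) (auto simp: fsp_def)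
  finally show ?thesis .
qed

lemma lin_linext: "(\<And>b. b \<in> B \<Longrightarrow> F b \<in> fsp C) \<Longrightarrow> lin B C (linext F)"
  unfolding lin_iff_fsp_linear using fsp_linear_linext linext_mem_fsp by blast

lemma linext_dl_eq:
  assumes f: "fsp_linear B f" and v: "v \<in> fsp B"
  shows "linext (\<lambda>b. f (dl b)) v = f v"
proof -
  let ?S = "{b. v b \<noteq> 0}"
  have fin: "finite ?S" and S: "?S \<subseteq> B" using v by (auto simp: fsp_def)
  have "f v = f (\<lambda>y. \<Sum>b\<in>?S. smul (v b) (dl b) y)"
    using sum_dl_eq[OF fin, of v] by (simp add: smul_def)
  also have "\<dots> = (\<lambda>c. \<Sum>b\<in>?S. smul (v b) (f (dl b)) c)"
    using fin S by (subst fsp_linear_sum[OF f]) (auto intro!: fsp_smul ext sum.cong simp: fsp_linear_smul[OF f])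
  finally show ?thesis by (simp add: linext_def smul_def)
qed

lemma fsp_linear_eqI:
  assumes "fsp_linear B f" "fsp_linear B g" "\<And>b. b \<in> B \<Longrightarrow> f (dl b) = g (dl b)" "v \<in> fsp B"
  shows "f v = g v"
proof -
  have "linext (\<lambda>b. f (dl b)) v = linext (\<lambda>b. g (dl b)) v"
    unfolding linext_def using assms by (intro ext sum.cong) (auto simp: fsp_def)
  then show ?thesis using assms by (simp add: linext_dl_eq)
qed

lemma fsp_vt: "a \<in> fsp B \<Longrightarrow> b \<in> fsp C \<Longrightarrow> vt a b \<in> fsp (B \<times> C)"
  unfolding fsp_def vt_def
  by (auto intro: finite_subset[of _ "{x. a x \<noteq> 0} \<times> {y. b y \<noteq> 0}"])

lemma vt_dl: "vt (dl b) (dl c) = dl (b, c)"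
  by (auto simp: vt_def dl_def)

lemma vt_smul_left: "vt (smul c a) b = smul c (vt a b)"
  by (auto simp: vt_def smul_def)

lemma vt_smul_right: "vt a (smul c b) = smul c (vt a b)"
  by (auto simp: vt_def smul_def)

lemma fsp_linear_vt_left: "fsp_linear B f \<Longrightarrow> fsp_linear B (\<lambda>a. vt (f a) b)"
  unfolding fsp_linear_def by (auto simp: vt_def smul_def fun_eq_iff algebra_simps)

lemma fsp_linear_vt_right: "fsp_linear B f \<Longrightarrow> fsp_linear B (\<lambda>b. vt a (f b))"
  unfolding fsp_linear_def by (auto simp: vt_def smul_def fun_eq_iff algebra_simps)

definition fsp_bilinear :: "'b set \<Rightarrow> 'c set \<Rightarrow> (('b \<Rightarrow> 'k::field) \<Rightarrow> ('c \<Rightarrow> 'k) \<Rightarrow> ('d \<Rightarrow> 'k)) \<Rightarrow> bool" where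
  "fsp_bilinear B C \<Phi> \<longleftrightarrow> (\<forall>b\<in>fsp C. fsp_linear B (\<lambda>a. \<Phi> a b)) \<and> (\<forall>a\<in>fsp B. fsp_linear C (\<lambda>b. \<Phi> a b))"

lemma linext_vt:
  assumes \<Phi>: "fsp_bilinear B C \<Phi>" and a: "a \<in> fsp B" and b: "b \<in> fsp C"
  shows "linext (\<lambda>(v, w). \<Phi> (dl v) (dl w)) (vt a b) = \<Phi> a b"
proof -
  let ?A = "{x. a x \<noteq> 0}" and ?B = "{y. b y \<noteq> 0}"
  have fin: "finite ?A" "finite ?B" and A: "?A \<subseteq> B" using a b by (auto simp: fsp_def)
  have inner: "linext (\<lambda>w. \<Phi> (dl v) (dl w)) b = \<Phi> (dl v) b" if "v \<in> ?A" for v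
    using \<Phi> b that A by (intro linext_dl_eq) (auto simp: fsp_bilinear_def)
  have "linext (\<lambda>(v, w). \<Phi> (dl v) (dl w)) (vt a b) =
      (\<lambda>y. \<Sum>v\<in>?A. a v * (\<Sum>w\<in>?B. b w * \<Phi> (dl v) (dl w) y))"
    using fin by (subst linext_eq_sum[where S = "?A \<times> ?B"])
      (auto simp: vt_def sum.cartesian_product sum_distrib_left mult.assoc split_def)
  also have "\<dots> = (\<lambda>y. \<Sum>v\<in>?A. a v * \<Phi> (dl v) b y)"
    using inner by (intro ext sum.cong) (auto simp: linext_def fun_eq_iff)
  also have "\<dots> = \<Phi> a b"
    using \<Phi> a b by (subst linext_dl_eq[symmetric, where B = B]) (auto simp: fsp_bilinear_def linext_def)
  finally show ?thesis .
qed

lemma fsp_emb: "r \<in> R \<Longrightarrow> v \<in> fsp B \<Longrightarrow> emb r v \<in> fsp (R \<times> B)"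
proof -
  assume r: "r \<in> R" and v: "v \<in> fsp B"
  have "{p. emb r v p \<noteq> 0} = Pair r ` {b. v b \<noteq> 0}"
    by (auto simp: emb_def split: if_splits)
  then show ?thesis using r v unfolding fsp_def by (auto simp: emb_def split: if_splits)
qed

lemma emb_dl: "emb r (dl b) = dl (r, b)"
  by (auto simp: emb_def dl_def)

lemma emb_smul: "emb r (smul c v) = smul c (emb r v)"
  by (auto simp: emb_def smul_def)

lemma fsp_linear_emb: "fsp_linear B f \<Longrightarrow> fsp_linear B (\<lambda>v. emb r (f v))"
  unfolding fsp_linear_def by (auto simp: emb_def smul_def fun_eq_iff)

lemma linext_emb: "v \<in> fsp B \<Longrightarrow> linext F (emb r v) = linext (\<lambda>b. F (r, b)) v"
proof -
  assume "v \<in> fsp B"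
  then have "linext F (emb r v) = (\<lambda>y. \<Sum>p\<in>Pair r ` {b. v b \<noteq> 0}. emb r v p * F p y)"
    by (intro linext_eq_sum) (auto simp: fsp_def emb_def split: if_splits)
  also have "\<dots> = (\<lambda>y. \<Sum>b\<in>{b. v b \<noteq> 0}. v b * F (r, b) y)"
    by (subst sum.reindex) (auto simp: inj_on_def emb_def)
  finally show ?thesis by (simp add: linext_def)
qed

lemma linext_vt_emb:
  assumes a: "a \<in> fsp B" and b: "b \<in> fsp C"
  shows "linext F (vt (emb r1 a) (emb r2 b)) = linext (\<lambda>(v, w). F ((r1, v), (r2, w))) (vt a b)"
proof -
  let ?S = "{v. a v \<noteq> 0} \<times> {w. b w \<noteq> 0}" and ?h = "\<lambda>(v, w). ((r1, v), (r2, w))"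
  have fin: "finite ?S" using a b by (auto simp: fsp_def)
  have "linext F (vt (emb r1 a) (emb r2 b)) = (\<lambda>y. \<Sum>p\<in>?h ` ?S. vt (emb r1 a) (emb r2 b) p * F p y)"
    using fin by (intro linext_eq_sum) (auto simp: vt_def emb_def split: if_splits)
  also have "\<dots> = (\<lambda>y. \<Sum>p\<in>?S. vt a b p * (case p of (v, w) \<Rightarrow> F ((r1, v), (r2, w))) y)"
    by (subst sum.reindex) (auto simp: inj_on_def vt_def emb_def intro!: sum.cong)
  also have "\<dots> = linext (\<lambda>(v, w). F ((r1, v), (r2, w))) (vt a b)"
    using fin by (intro linext_eq_sum[symmetric]) (auto simp: vt_def)
  finally show ?thesis .
qed

lemma sum_eq_single: "finite A \<Longrightarrow> a \<in> A \<Longrightarrow> (\<And>x. x \<in> A \<Longrightarrow> x \<noteq> a \<Longrightarrow> f x = 0) \<Longrightarrow> sum f A = f a"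
  by (subst sum.remove[of A a]) (auto intro!: sum.neutral)

lemma sum_sum_delta:
  assumes "finite A" "finite B" "a \<in> A" "b \<in> B"
  shows "(\<Sum>x\<in>A. \<Sum>y\<in>B. if x = a \<and> y = b \<and> P then X x y else 0) = (if P then X a b else 0)"
  using assms by (simp add: sum_eq_single[of A a] sum_eq_single[of B b])

section \<open>Representatives of left cosets\<close>

locale nested_subgroups = group L for L :: "'l monoid" (structure) +
  fixes T S :: "'l set"
  assumes subgroup_T: "subgroup T L" and subgroup_S: "subgroup S L" and S_subset_T: "S \<subseteq> T"
begin

lemma S_closed: "s \<in> S \<Longrightarrow> s \<in> carrier L"
  using subgroup.mem_carrier[OF subgroup_S] .

lemma T_closed: "t \<in> T \<Longrightarrow> t \<in> carrier L"
  using subgroup.mem_carrier[OF subgroup_T] .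

lemma mem_lcos_iff: "r \<in> carrier L \<Longrightarrow> t \<in> carrier L \<Longrightarrow> t \<in> r <# S \<longleftrightarrow> inv r \<otimes> t \<in> S"
  using subgroup.lcos_module_imp[OF subgroup_S is_group] subgroup.lcos_module_rev[OF subgroup_S is_group]
  by blast

lemma inv_mult_mem_S_sym: "a \<in> carrier L \<Longrightarrow> b \<in> carrier L \<Longrightarrow> inv a \<otimes> b \<in> S \<Longrightarrow> inv b \<otimes> a \<in> S"
  using subgroup.m_inv_closed[OF subgroup_S, of "inv a \<otimes> b"] by (simp add: inv_mult_group)

lemma inv_mult_mem_S_trans:
  assumes "a \<in> carrier L" "b \<in> carrier L" "c \<in> carrier L" "inv a \<otimes> b \<in> S" "inv b \<otimes> c \<in> S"
  shows "inv a \<otimes> c \<in> S"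
proof -
  have "b \<otimes> (inv b \<otimes> c) = c" using assms by (simp add: m_assoc[symmetric])
  then have "inv a \<otimes> c = (inv a \<otimes> b) \<otimes> (inv b \<otimes> c)" using assms by (simp add: m_assoc)
  then show ?thesis using assms subgroup.m_closed[OF subgroup_S] by simp
qed

lemma ex_ltrans: "\<exists>R. R \<subseteq> T \<and> (\<forall>t\<in>T. \<exists>!r\<in>R. t \<in> r <# S)"
proof -
  define ch where "ch t = (SOME r. r \<in> t <# S)" for t
  have ch: "ch t \<in> t <# S" "ch t \<in> T" if "t \<in> T" for t
  proof -
    show "ch t \<in> t <# S"
      unfolding ch_def using lcos_self[OF T_closed[OF that] subgroup_S] by (rule someI)
    then obtain s where "s \<in> S" "ch t = t \<otimes> s" by (auto simp: l_coset_def)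
    then show "ch t \<in> T" using that S_subset_T subgroup.m_closed[OF subgroup_T] by auto
  qed
  have "\<exists>!r\<in>ch ` T. t \<in> r <# S" if t: "t \<in> T" for t
  proof (rule ex1I[of _ "ch t"])
    have "t <# S = ch t <# S" using l_repr_independence[OF ch(1) T_closed subgroup_S] t by blast
    then show "ch t \<in> ch ` T \<and> t \<in> ch t <# S"
      using t lcos_self[OF T_closed subgroup_S] by auto
  next
    fix r assume "r \<in> ch ` T \<and> t \<in> r <# S"
    then obtain u where u: "u \<in> T" "r = ch u" "t \<in> ch u <# S" by auto
    have "u <# S = ch u <# S" "ch u <# S = t <# S"
      using l_repr_independence[OF ch(1) T_closed subgroup_S] u
        l_repr_independence[OF u(3) T_closed[OF ch(2)] subgroup_S] by auto
    then show "r = ch t" using u by (simp add: ch_def)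
  qed
  then show ?thesis using ch(2) by (intro exI[of _ "ch ` T"]) auto
qed

abbreviation "R \<equiv> ltrans L T S"

lemma ltrans_props: "R \<subseteq> T \<and> (\<forall>t\<in>T. \<exists>!r\<in>R. t \<in> r <# S)"
  unfolding ltrans_def using ex_ltrans by (rule someI_ex)

lemma ltrans_subset: "R \<subseteq> T"
  using ltrans_props by blast

lemma ltrans_closed: "r \<in> R \<Longrightarrow> r \<in> carrier L"
  using ltrans_subset T_closed by blast

lemma lrep_props: "t \<in> T \<Longrightarrow> lrep L T S t \<in> R \<and> inv (lrep L T S t) \<otimes> t \<in> S"
proof -
  assume t: "t \<in> T"
  have "\<exists>!r. r \<in> R \<and> t \<in> r <# S" using ltrans_props t by blast
  then have "lrep L T S t \<in> R \<and> t \<in> lrep L T S t <# S"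
    unfolding lrep_def by (rule theI')
  then show ?thesis using mem_lcos_iff[OF ltrans_closed T_closed[OF t]] by blast
qed

lemma lrep_mem: "t \<in> T \<Longrightarrow> lrep L T S t \<in> R"
  using lrep_props by blast

lemma lrep_inv_mult_mem: "t \<in> T \<Longrightarrow> inv (lrep L T S t) \<otimes> t \<in> S"
  using lrep_props by blast

lemma lrep_closed: "t \<in> T \<Longrightarrow> lrep L T S t \<in> carrier L"
  using lrep_mem ltrans_closed by blast

lemma lrep_unique:
  assumes t: "t \<in> T" and r: "r \<in> R" and rt: "inv r \<otimes> t \<in> S"
  shows "lrep L T S t = r"
proof -
  have "t \<in> r <# S" "t \<in> lrep L T S t <# S"
    using rt lrep_props[OF t] mem_lcos_iff[OF ltrans_closed T_closed[OF t]] r by blast+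
  then show ?thesis using ltrans_props t r lrep_mem[OF t] by blast
qed

lemma lrep_mult_cancel: "t \<in> T \<Longrightarrow> lrep L T S t \<otimes> (inv (lrep L T S t) \<otimes> t) = t"
  using lrep_closed T_closed by (simp add: m_assoc[symmetric])

lemma lrep_mult_S: "t \<in> T \<Longrightarrow> s \<in> S \<Longrightarrow> lrep L T S (t \<otimes> s) = lrep L T S t"
proof -
  assume ts: "t \<in> T" "s \<in> S"
  have c: "t \<in> carrier L" "s \<in> carrier L" using ts T_closed S_closed by auto
  have "t \<otimes> s \<in> T" using ts S_subset_T subgroup.m_closed[OF subgroup_T] by blast
  moreover have "inv (lrep L T S t) \<otimes> (t \<otimes> s) = (inv (lrep L T S t) \<otimes> t) \<otimes> s"
    using c lrep_closed[OF ts(1)] by (simp add: m_assoc)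
  ultimately show ?thesis
    using lrep_unique[OF _ lrep_mem[OF ts(1)]] lrep_inv_mult_mem[OF ts(1)] ts(2)
      subgroup.m_closed[OF subgroup_S] by simp
qed

end

section \<open>The crossed product algebra\<close>

locale crossed_product = L: group L + G: group G for L :: "'l monoid" (structure) and G :: "'g monoid" +
  fixes act :: "'l \<Rightarrow> 'g \<Rightarrow> 'g" and \<sigma> :: "'g \<Rightarrow> 'l \<Rightarrow> 'l \<Rightarrow> 'k::field" and \<tau> :: "'g \<Rightarrow> 'g \<Rightarrow> 'l \<Rightarrow> 'k"
  assumes finite_G: "finite (carrier G)" and finite_L: "finite (carrier L)"
    and auts: "act_by_auts G L act" and crossed: "crossed_data G L act \<sigma> \<tau>"
begin

lemma act_closed [simp]: "x \<in> carrier L \<Longrightarrow> g \<in> carrier G \<Longrightarrow> act x g \<in> carrier G"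
  using auts unfolding act_by_auts_def hom_def by auto

lemma act_mult: "x \<in> carrier L \<Longrightarrow> y \<in> carrier L \<Longrightarrow> g \<in> carrier G \<Longrightarrow> act (x \<otimes> y) g = act x (act y g)"
  using auts unfolding act_by_auts_def by auto

lemma act_one [simp]: "g \<in> carrier G \<Longrightarrow> act \<one> g = g"
  using auts unfolding act_by_auts_def by auto

lemma act_hom: "x \<in> carrier L \<Longrightarrow> g \<in> carrier G \<Longrightarrow> h \<in> carrier G \<Longrightarrow> act x (g \<otimes>\<^bsub>G\<^esub> h) = act x g \<otimes>\<^bsub>G\<^esub> act x h"
  using auts unfolding act_by_auts_def hom_def by auto

lemma act_inv_act [simp]: "x \<in> carrier L \<Longrightarrow> g \<in> carrier G \<Longrightarrow> act (inv x) (act x g) = g"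
  using act_mult[of "inv x" x g] by simp

lemma act_act_inv [simp]: "x \<in> carrier L \<Longrightarrow> g \<in> carrier G \<Longrightarrow> act x (act (inv x) g) = g"
  using act_mult[of x "inv x" g] by simp

lemma inv_mult_cancel_left [simp]: "x \<in> carrier L \<Longrightarrow> z \<in> carrier L \<Longrightarrow> inv x \<otimes> (x \<otimes> z) = z"
  by (simp add: L.m_assoc[symmetric])

lemma mult_inv_cancel_left [simp]: "x \<in> carrier L \<Longrightarrow> z \<in> carrier L \<Longrightarrow> x \<otimes> (inv x \<otimes> z) = z"
  by (simp add: L.m_assoc[symmetric])

lemma stabD: "x \<in> stab L act g \<Longrightarrow> act x g = g"
  by (simp add: stab_def)

lemma stab_closed: "x \<in> stab L act g \<Longrightarrow> x \<in> carrier L"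
  by (simp add: stab_def)

lemma stab_subgroup: "g \<in> carrier G \<Longrightarrow> subgroup (stab L act g) L"
proof (rule L.subgroupI)
  assume g: "g \<in> carrier G"
  show "stab L act g \<subseteq> carrier L" by (auto simp: stab_def)
  show "stab L act g \<noteq> {}" using g by (auto simp: stab_def)
  fix x y assume x: "x \<in> stab L act g" and y: "y \<in> stab L act g"
  show "inv x \<in> stab L act g" using x g act_inv_act[of x g] by (auto simp: stab_def)
  show "x \<otimes> y \<in> stab L act g" using x y g by (auto simp: stab_def act_mult)
qed

lemma stab_inv: "g \<in> carrier G \<Longrightarrow> x \<in> stab L act g \<Longrightarrow> inv x \<in> stab L act g"
  using subgroup.m_inv_closed[OF stab_subgroup] by blast

lemma stab_mult: "g \<in> carrier G \<Longrightarrow> x \<in> stab L act g \<Longrightarrow> y \<in> stab L act g \<Longrightarrow> x \<otimes> y \<in> stab L act g"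
  using subgroup.m_closed[OF stab_subgroup] by blast

lemma act_stab_mult: "g \<in> carrier G \<Longrightarrow> l \<in> carrier L \<Longrightarrow> s \<in> stab L act g \<Longrightarrow> act (l \<otimes> s) g = act l g"
  by (simp add: act_mult stab_closed stabD)

lemma stab_inter_subset: "g \<in> carrier G \<Longrightarrow> h \<in> carrier G \<Longrightarrow> stab L act g \<inter> stab L act h \<subseteq> stab L act (g \<otimes>\<^bsub>G\<^esub> h)"
  by (auto simp: stab_def act_hom)

lemma conj_mem_stab_iff:
  assumes "x \<in> carrier L" "g \<in> carrier G" "z \<in> carrier L"
  shows "inv x \<otimes> z \<otimes> x \<in> stab L act g \<longleftrightarrow> z \<in> stab L act (act x g)"
proof -
  have "act (inv x \<otimes> z \<otimes> x) g = act (inv x) (act z (act x g))"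
    using assms by (simp add: act_mult)
  then show ?thesis using assms by (auto simp: stab_def) (metis act_act_inv act_closed)
qed

lemma nested_stab: "g \<in> carrier G \<Longrightarrow> nested_subgroups L (carrier L) (stab L act g)"
  by (intro nested_subgroups.intro nested_subgroups_axioms.intro L.is_group L.subgroup_self stab_subgroup)
    (auto simp: stab_def)

lemma \<sigma>_nonzero: "g \<in> carrier G \<Longrightarrow> x \<in> carrier L \<Longrightarrow> y \<in> carrier L \<Longrightarrow> \<sigma> g x y \<noteq> 0"
  using crossed unfolding crossed_data_def by blast

lemma \<tau>_nonzero: "g \<in> carrier G \<Longrightarrow> h \<in> carrier G \<Longrightarrow> x \<in> carrier L \<Longrightarrow> \<tau> g h x \<noteq> 0"
  using crossed unfolding crossed_data_def by blast

lemma \<sigma>_one_left [simp]: "g \<in> carrier G \<Longrightarrow> x \<in> carrier L \<Longrightarrow> \<sigma> g \<one> x = 1"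
  using crossed unfolding crossed_data_def by blast

lemma \<sigma>_one_right [simp]: "g \<in> carrier G \<Longrightarrow> x \<in> carrier L \<Longrightarrow> \<sigma> g x \<one> = 1"
  using crossed unfolding crossed_data_def by blast

lemma \<sigma>_cocycle:
  "g \<in> carrier G \<Longrightarrow> x \<in> carrier L \<Longrightarrow> y \<in> carrier L \<Longrightarrow> z \<in> carrier L \<Longrightarrow>
    \<sigma> g x y * \<sigma> g (x \<otimes> y) z = \<sigma> (act (inv x) g) y z * \<sigma> g x (y \<otimes> z)"
  using crossed unfolding crossed_data_def by blast

lemma \<sigma>_\<tau>_compat:
  "g \<in> carrier G \<Longrightarrow> h \<in> carrier G \<Longrightarrow> x \<in> carrier L \<Longrightarrow> y \<in> carrier L \<Longrightarrow>
    \<sigma> g x y * \<sigma> h x y * \<tau> g h x * \<tau> (act (inv x) g) (act (inv x) h) y = \<sigma> (g \<otimes>\<^bsub>G\<^esub> h) x y * \<tau> g h (x \<otimes> y)"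
  using crossed unfolding crossed_data_def by blast

lemma \<sigma>_cocycle_act:
  assumes "g \<in> carrier G" "y \<in> carrier L" "l \<in> carrier L" "t \<in> carrier L"
  shows "\<sigma> (act (y \<otimes> l) g) y l * \<sigma> (act (y \<otimes> l) g) (y \<otimes> l) t
       = \<sigma> (act l g) l t * \<sigma> (act (y \<otimes> l) g) y (l \<otimes> t)"
  using \<sigma>_cocycle[of "act (y \<otimes> l) g" y l t] assms by (simp add: act_mult)

lemma \<sigma>_inv_swap: "x \<in> carrier L \<Longrightarrow> g \<in> carrier G \<Longrightarrow> \<sigma> g (inv x) x = \<sigma> (act x g) x (inv x)"
  using \<sigma>_cocycle[of "act x g" x "inv x" x] by simp

lemma \<sigma>_cocycle_stab:
  assumes g: "g \<in> carrier G" and l: "l \<in> carrier L" and c: "s \<in> carrier L" "t \<in> carrier L" "t' \<in> carrier L" "s' \<in> carrier L"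
    and s: "s \<in> stab L act g" and t': "t' \<in> stab L act g" and ts: "t' \<otimes> s' = s \<otimes> t"
  shows "\<sigma> g s t / \<sigma> g t' s' * \<sigma> (act l g) l t' * \<sigma> (act l g) (l \<otimes> t') s'
    = \<sigma> (act l g) l s * \<sigma> (act l g) (l \<otimes> s) t"
proof -
  have "\<sigma> (act l g) l t' * \<sigma> (act l g) (l \<otimes> t') s' = \<sigma> g t' s' * \<sigma> (act l g) l (s \<otimes> t)"
    using \<sigma>_cocycle_act[OF g l c(3,4)] act_stab_mult[OF g l t'] stabD[OF t'] ts by simp
  moreover have "\<sigma> (act l g) l s * \<sigma> (act l g) (l \<otimes> s) t = \<sigma> g s t * \<sigma> (act l g) l (s \<otimes> t)"
    using \<sigma>_cocycle_act[OF g l c(1,2)] act_stab_mult[OF g l s] stabD[OF s] by simp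
  ultimately show ?thesis using \<sigma>_nonzero[OF g c(3,4)] by (simp add: field_simps)
qed

abbreviation "HM \<equiv> Hmult G L act \<sigma>"

lemma Hmult_single_row:
  assumes g: "g \<in> carrier G" and z: "z \<in> carrier L" and x: "x \<in> carrier L"
    and row: "\<And>x'. a (g, x') = (if x' = x then \<alpha> else 0)"
  shows "HM a b (g, z) = \<alpha> * b (act (inv x) g, inv x \<otimes> z) * \<sigma> g x (inv x \<otimes> z)"
proof -
  let ?h = "act (inv x) g" and ?y = "inv x \<otimes> z"
  have cond: "(act x h = g \<and> x \<otimes> y = z) \<longleftrightarrow> (h = ?h \<and> y = ?y)"
    if "h \<in> carrier G" "y \<in> carrier L" for h y
    using that g z x by (auto simp: L.m_assoc[symmetric])
  have "HM a b (g, z) = (\<Sum>x'\<in>carrier L. \<Sum>h\<in>carrier G. \<Sum>y\<in>carrier L.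
      if act x' h = g \<and> x' \<otimes> y = z then a (g, x') * b (h, y) * \<sigma> g x' y else 0)"
    unfolding Hmult_def prod.case using g by (intro sum.cong refl) (simp add: eq_commute[of g])
  also have "\<dots> = (\<Sum>h\<in>carrier G. \<Sum>y\<in>carrier L.
      if act x h = g \<and> x \<otimes> y = z then a (g, x) * b (h, y) * \<sigma> g x y else 0)"
    using row by (intro sum_eq_single[OF finite_L x] sum.neutral ballI) simp
  also have "\<dots> = (\<Sum>h\<in>carrier G. if h = ?h then \<Sum>y\<in>carrier L. if y = ?y then \<alpha> * b (h, y) * \<sigma> g x y else 0 else 0)"
    by (intro sum.cong refl) (auto simp: cond row intro!: sum.cong)
  finally show ?thesis using finite_G finite_L g z x by simp
qed

lemma Hmult_zero_outside: "g \<notin> carrier G \<or> z \<notin> carrier L \<Longrightarrow> HM a b (g, z) = 0"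
  by (auto simp: Hmult_def intro!: sum.neutral)

lemma Hmult_pe_pe:
  assumes "g \<in> carrier G" "x \<in> carrier L" "y \<in> carrier L"
  shows "HM (pe (act x g) x) (pe g y) (act x g, x \<otimes> y) = \<sigma> (act x g) x y"
  using assms by (subst Hmult_single_row[where x = x and \<alpha> = 1]) (auto simp: pe_def dl_def)

definition xbar_inv :: "'l \<Rightarrow> 'g \<times> 'l \<Rightarrow> 'k" where
  "xbar_inv x = (\<lambda>(h, y). if h \<in> carrier G \<and> y = inv x then inverse (\<sigma> (act x h) x (inv x)) else 0)"

lemma Hmult_xbar_xbar_inv: "x \<in> carrier L \<Longrightarrow> HM (xbar G x) (xbar_inv x) = Hone G L"
proof (rule ext, unfold split_paired_all)
  fix g z assume x: "x \<in> carrier L"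
  show "HM (xbar G x) (xbar_inv x) (g, z) = Hone G L (g, z)"
  proof (cases "g \<in> carrier G \<and> z \<in> carrier L")
    case True
    then have "inv x \<otimes> z = inv x \<longleftrightarrow> z = \<one>" using x by simp
    with True x show ?thesis
      by (subst Hmult_single_row[where x = x and \<alpha> = 1])
        (auto simp: xbar_def xbar_inv_def Hone_def \<sigma>_nonzero)
  qed (auto simp: Hmult_zero_outside Hone_def)
qed

lemma Hmult_xbar_inv_xbar: "x \<in> carrier L \<Longrightarrow> HM (xbar_inv x) (xbar G x) = Hone G L"
proof (rule ext, unfold split_paired_all)
  fix g z assume x: "x \<in> carrier L"
  show "HM (xbar_inv x) (xbar G x) (g, z) = Hone G L (g, z)"
  proof (cases "g \<in> carrier G \<and> z \<in> carrier L")
    case True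
    then have "x \<otimes> z = x \<longleftrightarrow> z = \<one>" using x by simp
    with True x show ?thesis
      by (subst Hmult_single_row[where x = "inv x" and \<alpha> = "inverse (\<sigma> (act x g) x (inv x))"])
        (auto simp: xbar_def xbar_inv_def Hone_def \<sigma>_nonzero \<sigma>_inv_swap)
  qed (auto simp: Hmult_zero_outside Hone_def)
qed

lemma Hinv_xbar:
  assumes x: "x \<in> carrier L"
  shows "Hinv G L act \<sigma> (xbar G x) = xbar_inv x"
  unfolding Hinv_def
proof (rule the1_equality)
  show inv: "xbar_inv x \<in> Helts G L \<and> HM (xbar G x) (xbar_inv x) = Hone G L \<and> HM (xbar_inv x) (xbar G x) = Hone G L"
    using x Hmult_xbar_xbar_inv Hmult_xbar_inv_xbar by (auto simp: Helts_def xbar_inv_def)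
  show "\<exists>!b. b \<in> Helts G L \<and> HM (xbar G x) b = Hone G L \<and> HM b (xbar G x) = Hone G L"
  proof (rule ex1I, fact inv)
  fix b assume b: "b \<in> Helts G L \<and> HM (xbar G x) b = Hone G L \<and> HM b (xbar G x) = Hone G L"
  show "b = xbar_inv x"
  proof
    fix p :: "'g \<times> 'l"
    obtain h y where p: "p = (h, y)" by fastforce
    show "b p = xbar_inv x p"
    proof (cases "h \<in> carrier G \<and> y \<in> carrier L")
      case True
      have "b (h, y) * \<sigma> (act x h) x y = Hone G L (act x h, x \<otimes> y)"
        using True x b Hmult_single_row[of "act x h" "x \<otimes> y" x "xbar G x" 1 b]
        by (simp add: xbar_def L.m_assoc[symmetric])
      moreover have "x \<otimes> y = \<one> \<longleftrightarrow> y = inv x"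
        using True x by (metis L.inv_equality L.inv_inv L.inv_closed L.r_inv)
      ultimately show ?thesis using True x \<sigma>_nonzero[of "act x h" x y]
        by (auto simp: p xbar_inv_def Hone_def field_simps)
    qed (use b x in \<open>auto simp: p Helts_def xbar_inv_def\<close>)
  qed
  qed
qed

lemma Hmult_xbar_pe:
  assumes x: "x \<in> carrier L" and g: "g \<in> carrier G" and y: "y \<in> carrier L"
  shows "HM (xbar G x) (pe g y) = (\<lambda>p. if p = (act x g, x \<otimes> y) then \<sigma> (act x g) x y else 0)"
proof
  fix p :: "'g \<times> 'l"
  obtain g' z where p: "p = (g', z)" by fastforce
  show "HM (xbar G x) (pe g y) p = (if p = (act x g, x \<otimes> y) then \<sigma> (act x g) x y else 0)"
  proof (cases "g' \<in> carrier G \<and> z \<in> carrier L")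
    case True
    then have "act (inv x) g' = g \<longleftrightarrow> g' = act x g" "inv x \<otimes> z = y \<longleftrightarrow> z = x \<otimes> y"
      using x g y by (auto simp: L.m_assoc[symmetric])
    with True x show ?thesis
      by (subst p, subst Hmult_single_row[where x = x and \<alpha> = 1]) (auto simp: p xbar_def pe_def dl_def)
  qed (use x y g in \<open>auto simp: p Hmult_zero_outside\<close>)
qed

lemma Hconj_pe:
  assumes x: "x \<in> carrier L" and g: "g \<in> carrier G" and z: "z \<in> stab L act (act x g)"
  shows "Hconj G L act \<sigma> x (pe g (inv x \<otimes> z \<otimes> x)) (act x g, z) = \<sigma> (act x g) x (inv x \<otimes> z \<otimes> x) / \<sigma> (act x g) z x"
proof -
  let ?h = "act x g" and ?y = "inv x \<otimes> z \<otimes> x"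
  have zc: "z \<in> carrier L" and h: "?h \<in> carrier G" and zh: "act (inv z) ?h = ?h"
    using z x g stab_inv[of ?h z] by (auto simp: stab_def)
  have yc: "?y \<in> carrier L" using x zc by simp
  have xy: "x \<otimes> ?y = z \<otimes> x" and yz: "inv (z \<otimes> x) \<otimes> z = inv x"
    using x zc by (simp_all add: L.m_assoc L.inv_mult_group)
  have "act (inv (z \<otimes> x)) ?h = g" using x zc g zh by (simp add: L.inv_mult_group act_mult)
  then have "Hconj G L act \<sigma> x (pe g ?y) (?h, z) = \<sigma> ?h x ?y * \<sigma> ?h (z \<otimes> x) (inv x) / \<sigma> ?h x (inv x)"
    unfolding Hconj_def Hinv_xbar[OF x] Hmult_xbar_pe[OF x g yc] xy
    using h zc x yz g by (subst Hmult_single_row[where x = "z \<otimes> x" and \<alpha> = "\<sigma> ?h x ?y"])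
      (auto simp: xbar_inv_def divide_inverse)
  also have "\<dots> = \<sigma> ?h x ?y * \<sigma> ?h (z \<otimes> x) (inv x) / (\<sigma> ?h z x * \<sigma> ?h (z \<otimes> x) (inv x))"
    using \<sigma>_cocycle[of ?h z x "inv x"] h zc x zh by simp
  finally show ?thesis using \<sigma>_nonzero h zc x by simp
qed

lemma conjmod_eq:
  assumes "x \<in> carrier L" "g \<in> carrier G" "z \<in> stab L act (act x g)"
  shows "conjmod G L act \<sigma> x g \<rho>W z w
    = smul (\<sigma> (act x g) z x / \<sigma> (act x g) x (inv x \<otimes> z \<otimes> x)) (\<rho>W (inv x \<otimes> z \<otimes> x) w)"
  using Hconj_pe[OF assms] by (simp add: conjmod_def Let_def)

end

section \<open>Induced modules\<close>

context crossed_product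
begin

text \<open>The identities satisfied by \<open>l \<mapsto> p\<^bsub>l g\<^esub> lbar \<otimes> -\<close> in an induced module (\<open>ind_vec\<close> below);
  by Frobenius reciprocity every family satisfying them defines an H-map out of the induced module.\<close>

definition H_covariant ::
    "'g \<Rightarrow> 'u set \<Rightarrow> ('g \<Rightarrow> 'l \<Rightarrow> ('m \<Rightarrow> 'k) \<Rightarrow> ('m \<Rightarrow> 'k)) \<Rightarrow> ('l \<Rightarrow> ('u \<Rightarrow> 'k) \<Rightarrow> ('m \<Rightarrow> 'k)) \<Rightarrow> bool" where
  "H_covariant g BU \<rho>M \<Phi> \<longleftrightarrow> (\<forall>k\<in>carrier G. \<forall>y\<in>carrier L. \<forall>l\<in>carrier L. \<forall>u\<in>fsp BU.
     \<rho>M k y (\<Phi> l u) = (if k = act (y \<otimes> l) g then smul (\<sigma> k y l) (\<Phi> (y \<otimes> l) u) else (\<lambda>_. 0)))"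

definition twisted_balanced ::
    "'g \<Rightarrow> 'l set \<Rightarrow> 'u set \<Rightarrow> ('l \<Rightarrow> ('u \<Rightarrow> 'k) \<Rightarrow> ('u \<Rightarrow> 'k)) \<Rightarrow> ('l \<Rightarrow> ('u \<Rightarrow> 'k) \<Rightarrow> ('m \<Rightarrow> 'k)) \<Rightarrow> bool" where
  "twisted_balanced g S BU \<rho>U \<Phi> \<longleftrightarrow> (\<forall>l\<in>carrier L. \<forall>s\<in>S. \<forall>u\<in>fsp BU.
     \<Phi> l (\<rho>U s u) = smul (\<sigma> (act l g) l s) (\<Phi> (l \<otimes> s) u))"

lemma H_covariantD:
  "H_covariant g BU \<rho>M \<Phi> \<Longrightarrow> k \<in> carrier G \<Longrightarrow> y \<in> carrier L \<Longrightarrow> l \<in> carrier L \<Longrightarrow> u \<in> fsp BU \<Longrightarrow>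
    \<rho>M k y (\<Phi> l u) = (if k = act (y \<otimes> l) g then smul (\<sigma> k y l) (\<Phi> (y \<otimes> l) u) else (\<lambda>_. 0))"
  by (simp add: H_covariant_def)

lemma twisted_balancedD:
  "twisted_balanced g S BU \<rho>U \<Phi> \<Longrightarrow> l \<in> carrier L \<Longrightarrow> s \<in> S \<Longrightarrow> u \<in> fsp BU \<Longrightarrow>
    \<Phi> l (\<rho>U s u) = smul (\<sigma> (act l g) l s) (\<Phi> (l \<otimes> s) u)"
  by (simp add: twisted_balanced_def)

end

locale induced_module = crossed_product L G act \<sigma> \<tau>
  for L :: "'l monoid" (structure) and G :: "'g monoid" and act :: "'l \<Rightarrow> 'g \<Rightarrow> 'g"
    and \<sigma> :: "'g \<Rightarrow> 'l \<Rightarrow> 'l \<Rightarrow> 'k::field" and \<tau> +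
  fixes g :: 'g and BU :: "'u set" and \<rho>U :: "'l \<Rightarrow> ('u \<Rightarrow> 'k) \<Rightarrow> ('u \<Rightarrow> 'k)"
  assumes g_closed: "g \<in> carrier G" and lin_module: "\<And>s. s \<in> stab L act g \<Longrightarrow> lin BU BU (\<rho>U s)"
begin

abbreviation "Lg \<equiv> stab L act g"
abbreviation "lr \<equiv> lrep L (carrier L) Lg"
abbreviation "R \<equiv> ltrans L (carrier L) Lg"
abbreviation "stab_part l \<equiv> inv (lr l) \<otimes> l"
abbreviation "\<rho> \<equiv> indH G L act \<sigma> g \<rho>U"
abbreviation "BI \<equiv> indH_basis L act g BU"

sublocale T: nested_subgroups L "carrier L" Lg
  by (rule nested_stab[OF g_closed])

lemma BI_eq: "BI = R \<times> BU"
  by (simp add: indH_basis_def)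

lemma Lg_closed: "s \<in> Lg \<Longrightarrow> s \<in> carrier L"
  by (simp add: stab_def)

lemma fsp_linear_module: "s \<in> Lg \<Longrightarrow> fsp_linear BU (\<rho>U s)"
  using lin_module lin_fsp_linear by blast

lemma module_mem_fsp: "s \<in> Lg \<Longrightarrow> a \<in> fsp BU \<Longrightarrow> \<rho>U s a \<in> fsp BU"
  using lin_module lin_mem_fsp by blast

lemma lr_props:
  "l \<in> carrier L \<Longrightarrow> lr l \<in> R \<and> lr l \<in> carrier L \<and> inv (lr l) \<otimes> l \<in> Lg \<and> lr l \<otimes> (inv (lr l) \<otimes> l) = l"
  using T.lrep_mem T.lrep_inv_mult_mem T.lrep_closed T.lrep_mult_cancel by blast

lemma act_lr: "l \<in> carrier L \<Longrightarrow> act (lr l) g = act l g"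
  using act_stab_mult[OF g_closed, of "lr l" "inv (lr l) \<otimes> l"] lr_props by simp

lemma indH_emb:
  assumes k: "k \<in> carrier G" and y: "y \<in> carrier L" and r: "r \<in> R" and b: "b \<in> fsp BU"
  defines "r' \<equiv> lr (y \<otimes> r)" and "s \<equiv> inv (lr (y \<otimes> r)) \<otimes> (y \<otimes> r)"
  shows "\<rho> k y (emb r b) =
    (if k = act (y \<otimes> r) g then smul (\<sigma> k y r / \<sigma> k r' s) (emb r' (\<rho>U s b)) else (\<lambda>_. 0))"
proof -
  have rc: "r \<in> carrier L" using r T.ltrans_closed by blast
  have P: "r' \<in> carrier L" "s \<in> Lg" "r' \<otimes> s = y \<otimes> r"
    using lr_props[of "y \<otimes> r"] y rc unfolding r'_def s_def by auto
  have lin: "fsp_linear BU (\<lambda>u. smul c (emb r' (\<rho>U s u)))" for c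
    by (intro fsp_linear_scale fsp_linear_emb fsp_linear_module P)
  have "\<rho> k y (emb r b) = linext (\<lambda>u. if k = act (y \<otimes> r) g then
      smul (HM (pe k y) (pe (act r g) r) (k, y \<otimes> r) / HM (pe k r') (pe g s) (k, y \<otimes> r)) (emb r' (\<rho>U s (dl u)))
      else (\<lambda>_. 0)) b"
    unfolding indH_def r'_def s_def by (subst linext_emb[OF b]) (simp add: Let_def)
  also have "\<dots> = (if k = act (y \<otimes> r) g then smul (\<sigma> k y r / \<sigma> k r' s) (emb r' (\<rho>U s b)) else (\<lambda>_. 0))"
  proof (cases "k = act (y \<otimes> r) g")
    case True
    then have "HM (pe k y) (pe (act r g) r) (k, y \<otimes> r) = \<sigma> k y r"
      using y rc g_closed Hmult_pe_pe[of "act r g" y r] by (simp add: act_mult)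
    moreover have "HM (pe k r') (pe g s) (k, y \<otimes> r) = \<sigma> k r' s"
      using True P g_closed Hmult_pe_pe[of g r' s] act_stab_mult[OF g_closed] by (metis Lg_closed)
    ultimately show ?thesis using True linext_dl_eq[OF lin b] by simp
  qed (simp add: linext_def)
  finally show ?thesis .
qed

lemma fsp_linear_indH: "fsp_linear BI (\<rho> k y)"
  unfolding indH_def by (rule fsp_linear_linext)

lemma indH_mem_fsp:
  assumes y: "y \<in> carrier L" and v: "v \<in> fsp BI"
  shows "\<rho> k y v \<in> fsp BI"
proof -
  have "emb (lr (y \<otimes> r)) (\<rho>U (inv (lr (y \<otimes> r)) \<otimes> (y \<otimes> r)) (dl u)) \<in> fsp BI"
    if "r \<in> R" "u \<in> BU" for r u
    using that y T.ltrans_closed lr_props[of "y \<otimes> r"] unfolding BI_eq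
    by (intro fsp_emb module_mem_fsp fsp_dl) auto
  then show ?thesis
    unfolding indH_def by (intro linext_mem_fsp[OF _ v]) (auto simp: BI_eq Let_def fsp_smul)
qed

lemma indH_family_dl:
  assumes lin: "\<And>l. l \<in> carrier L \<Longrightarrow> lin BU BM (\<Phi> l)"
    and cov: "H_covariant g BU \<rho>M \<Phi>" and bal: "twisted_balanced g Lg BU \<rho>U \<Phi>"
    and k: "k \<in> carrier G" and y: "y \<in> carrier L" and r: "r \<in> R" and u: "u \<in> BU"
  shows "linext (\<lambda>(r, u). \<Phi> r (dl u)) (\<rho> k y (dl (r, u))) = \<rho>M k y (\<Phi> r (dl u))"
proof -
  let ?F = "linext (\<lambda>(r, u). \<Phi> r (dl u))"
  define r' where "r' = lr (y \<otimes> r)"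
  define s where "s = inv r' \<otimes> (y \<otimes> r)"
  have rc: "r \<in> carrier L" using r T.ltrans_closed by blast
  have P: "r' \<in> R" "r' \<in> carrier L" "s \<in> Lg" "r' \<otimes> s = y \<otimes> r" "act r' g = act (y \<otimes> r) g"
    using lr_props[of "y \<otimes> r"] act_lr[of "y \<otimes> r"] y rc unfolding r'_def s_def by auto
  have w: "\<rho>U s (dl u) \<in> fsp BU" using module_mem_fsp[OF P(3)] u by simp
  have \<rho>_dl: "\<rho> k y (dl (r, u)) =
      (if k = act (y \<otimes> r) g then smul (\<sigma> k y r / \<sigma> k r' s) (emb r' (\<rho>U s (dl u))) else (\<lambda>_. 0))"
    using indH_emb[OF k y r fsp_dl[OF u]] by (simp add: emb_dl[symmetric] r'_def s_def)
  have F_emb: "?F (emb r' (\<rho>U s (dl u))) = \<Phi> r' (\<rho>U s (dl u))"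
    using linext_dl_eq[OF lin_fsp_linear[OF lin[OF P(2)]] w] by (simp add: linext_emb[OF w])
  have "?F (smul c (emb r' (\<rho>U s (dl u)))) = smul c (\<Phi> r' (\<rho>U s (dl u)))" for c
    by (subst fsp_linear_smul[OF fsp_linear_linext fsp_emb[OF P(1) w]]) (simp add: F_emb)
  then have "?F (\<rho> k y (dl (r, u))) =
      (if k = act (y \<otimes> r) g then smul (\<sigma> k y r / \<sigma> k r' s) (\<Phi> r' (\<rho>U s (dl u))) else (\<lambda>_. 0))"
    by (simp add: \<rho>_dl linext_def)
  also have "\<dots> = \<rho>M k y (\<Phi> r (dl u))"
    using twisted_balancedD[OF bal P(2,3) fsp_dl[OF u]] H_covariantD[OF cov k y rc fsp_dl[OF u]]
      P \<sigma>_nonzero[of "act (y \<otimes> r) g" r' s] y rc g_closed Lg_closed[OF P(3)] by (simp add: smul_smul)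
  finally show ?thesis .
qed

lemma indH_hom_of_family:
  assumes lin: "\<And>l. l \<in> carrier L \<Longrightarrow> lin BU BM (\<Phi> l)" and lin_M: "fsp_linear BM (\<rho>M k y)"
    and cov: "H_covariant g BU \<rho>M \<Phi>" and bal: "twisted_balanced g Lg BU \<rho>U \<Phi>"
    and k: "k \<in> carrier G" and y: "y \<in> carrier L" and v: "v \<in> fsp BI"
  shows "linext (\<lambda>(r, u). \<Phi> r (dl u)) (\<rho> k y v) = \<rho>M k y (linext (\<lambda>(r, u). \<Phi> r (dl u)) v)"
proof (rule fsp_linear_eqI[OF _ _ _ v])
  let ?F = "linext (\<lambda>(r, u). \<Phi> r (dl u))"
  have F_mem: "?F w \<in> fsp BM" if "w \<in> fsp BI" for w
    using that lin T.ltrans_closed by (intro linext_mem_fsp) (auto simp: BI_eq intro!: lin_mem_fsp[OF _ fsp_dl])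
  show "fsp_linear BI (\<lambda>v. ?F (\<rho> k y v))"
    using fsp_linear_indH indH_mem_fsp[OF y] fsp_linear_linext by (rule fsp_linear_comp)
  show "fsp_linear BI (\<lambda>v. \<rho>M k y (?F v))"
    using fsp_linear_linext F_mem lin_M by (rule fsp_linear_comp)
  fix p assume "p \<in> BI"
  then show "?F (\<rho> k y (dl p)) = \<rho>M k y (?F (dl p))"
    using indH_family_dl[OF lin cov bal k y] by (auto simp: BI_eq)
qed

end

locale twisted_induced_module = induced_module L G act \<sigma> \<tau> g BU \<rho>U
  for L :: "'l monoid" (structure) and G :: "'g monoid" and act :: "'l \<Rightarrow> 'g \<Rightarrow> 'g"
    and \<sigma> :: "'g \<Rightarrow> 'l \<Rightarrow> 'l \<Rightarrow> 'k::field" and \<tau> and g :: 'g and BU :: "'u set"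
    and \<rho>U :: "'l \<Rightarrow> ('u \<Rightarrow> 'k) \<Rightarrow> ('u \<Rightarrow> 'k)" +
  assumes twisted_module: "tw_mod L (stab L act g) (\<sigma> g) BU \<rho>U"
begin

lemma module_mult: "s \<in> Lg \<Longrightarrow> t \<in> Lg \<Longrightarrow> a \<in> fsp BU \<Longrightarrow> \<rho>U s (\<rho>U t a) = smul (\<sigma> g s t) (\<rho>U (s \<otimes> t) a)"
  using twisted_module by (simp add: tw_mod_def)

lemma module_one: "a \<in> fsp BU \<Longrightarrow> \<rho>U \<one> a = a"
  using twisted_module by (simp add: tw_mod_def)

definition inv_action :: "'l \<Rightarrow> ('u \<Rightarrow> 'k) \<Rightarrow> ('u \<Rightarrow> 'k)" where
  "inv_action s a = smul (inverse (\<sigma> g s (inv s))) (\<rho>U (inv s) a)"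

lemma inv_action_mem_fsp: "s \<in> Lg \<Longrightarrow> a \<in> fsp BU \<Longrightarrow> inv_action s a \<in> fsp BU"
  unfolding inv_action_def using stab_inv[OF g_closed] by (intro fsp_smul module_mem_fsp)

lemma fsp_linear_inv_action: "s \<in> Lg \<Longrightarrow> fsp_linear BU (inv_action s)"
  unfolding inv_action_def using stab_inv[OF g_closed] by (intro fsp_linear_scale fsp_linear_module)

lemma module_inv_action:
  assumes s: "s \<in> Lg" and a: "a \<in> fsp BU"
  shows "\<rho>U s (inv_action s a) = a"
proof -
  have s': "inv s \<in> Lg" and sc: "s \<in> carrier L" using s stab_inv[OF g_closed] Lg_closed by auto
  have "\<rho>U s (\<rho>U (inv s) a) = smul (\<sigma> g s (inv s)) a"
    using module_mult[OF s s' a] sc module_one[OF a] by simp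
  then show ?thesis
    using fsp_linear_smul[OF fsp_linear_module[OF s] module_mem_fsp[OF s' a]] \<sigma>_nonzero[OF g_closed sc] sc
    by (simp add: inv_action_def smul_smul)
qed

lemma inv_action_module:
  assumes s: "s \<in> Lg" and a: "a \<in> fsp BU"
  shows "inv_action s (\<rho>U s a) = a"
proof -
  have s': "inv s \<in> Lg" and sc: "s \<in> carrier L" using s stab_inv[OF g_closed] Lg_closed by auto
  have "\<rho>U (inv s) (\<rho>U s a) = smul (\<sigma> g s (inv s)) a"
    using module_mult[OF s' s a] sc module_one[OF a] \<sigma>_inv_swap[OF sc g_closed] stabD[OF s] by simp
  then show ?thesis using \<sigma>_nonzero[OF g_closed sc] sc by (simp add: inv_action_def smul_smul)
qed

text \<open>The vector \<open>p\<^bsub>l g\<^esub> lbar \<otimes> a\<close> of the induced module: writing \<open>l = r s\<close> with \<open>r = lr l\<close>,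
  it equals \<open>\<sigma>\<^bsub>l g\<^esub>(r, s)\<inverse> (r \<otimes> s a)\<close>.\<close>

definition ind_vec :: "'l \<Rightarrow> ('u \<Rightarrow> 'k) \<Rightarrow> ('l \<times> 'u \<Rightarrow> 'k)" where
  "ind_vec l a = smul (inverse (\<sigma> (act l g) (lr l) (stab_part l))) (emb (lr l) (\<rho>U (stab_part l) a))"

lemma ind_vec_mem_fsp: "l \<in> carrier L \<Longrightarrow> a \<in> fsp BU \<Longrightarrow> ind_vec l a \<in> fsp BI"
  unfolding ind_vec_def BI_eq using lr_props by (intro fsp_smul fsp_emb module_mem_fsp) auto

lemma fsp_linear_ind_vec: "l \<in> carrier L \<Longrightarrow> fsp_linear BU (ind_vec l)"
  unfolding ind_vec_def using lr_props by (intro fsp_linear_scale fsp_linear_emb fsp_linear_module) auto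

lemma ind_vec_rep: "r \<in> R \<Longrightarrow> a \<in> fsp BU \<Longrightarrow> ind_vec r a = emb r a"
  using T.lrep_unique[of r r] T.ltrans_closed[of r] g_closed
  by (simp add: ind_vec_def module_one subgroup.one_closed[OF stab_subgroup])

lemma twisted_balanced_ind_vec: "twisted_balanced g Lg BU \<rho>U ind_vec"
  unfolding twisted_balanced_def
proof (intro ballI)
  fix l s and a :: "'u \<Rightarrow> 'k" assume l: "l \<in> carrier L" and s: "s \<in> Lg" and a: "a \<in> fsp BU"
  define r where "r = lr l"
  define s0 where "s0 = inv r \<otimes> l"
  have P: "r \<in> carrier L" "s0 \<in> Lg" "s0 \<in> carrier L" "r \<otimes> s0 = l" "s \<in> carrier L"
    using lr_props[OF l] s Lg_closed unfolding r_def s0_def by auto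
  have lr_ls: "lr (l \<otimes> s) = r" and s_ls: "inv r \<otimes> (l \<otimes> s) = s0 \<otimes> s"
    using T.lrep_mult_S[OF _ s] l P unfolding r_def s0_def by (simp_all add: L.m_assoc)
  have act_l: "act l g = act r g" and act_ls: "act (l \<otimes> s) g = act l g"
    using act_lr[OF l] act_stab_mult[OF g_closed l s] by (simp_all add: r_def)
  have "\<sigma> (act l g) r s0 * \<sigma> (act l g) l s = \<sigma> g s0 s * \<sigma> (act l g) r (s0 \<otimes> s)"
    using \<sigma>_cocycle_act[OF g_closed P(1,3,5)] act_l P(4) stabD[OF P(2)] by simp
  then have scal: "inverse (\<sigma> (act l g) r s0) * \<sigma> g s0 s = \<sigma> (act l g) l s * inverse (\<sigma> (act l g) r (s0 \<otimes> s))"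
    using \<sigma>_nonzero g_closed l P by (simp add: field_simps)
  have "ind_vec l (\<rho>U s a) = smul (inverse (\<sigma> (act l g) r s0)) (emb r (\<rho>U s0 (\<rho>U s a)))"
    by (simp add: ind_vec_def r_def[symmetric] s0_def[symmetric])
  also have "\<dots> = smul (inverse (\<sigma> (act l g) r s0) * \<sigma> g s0 s) (emb r (\<rho>U (s0 \<otimes> s) a))"
    using module_mult[OF P(2) s a] by (simp add: smul_smul emb_smul)
  also have "\<dots> = smul (\<sigma> (act l g) l s) (ind_vec (l \<otimes> s) a)"
    unfolding ind_vec_def lr_ls s_ls scal act_ls by (simp add: smul_smul)
  finally show "ind_vec l (\<rho>U s a) = smul (\<sigma> (act l g) l s) (ind_vec (l \<otimes> s) a)" .
qed

lemma indH_ind_vec_rep: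
  assumes k: "k \<in> carrier G" and y: "y \<in> carrier L" and r: "r \<in> R" and a: "a \<in> fsp BU"
  shows "\<rho> k y (ind_vec r a) = (if k = act (y \<otimes> r) g then smul (\<sigma> k y r) (ind_vec (y \<otimes> r) a) else (\<lambda>_. 0))"
proof -
  have "y \<otimes> r \<in> carrier L" using y r T.ltrans_closed by blast
  then have "\<sigma> k (lr (y \<otimes> r)) (inv (lr (y \<otimes> r)) \<otimes> (y \<otimes> r)) \<noteq> 0"
    using lr_props \<sigma>_nonzero[OF k] Lg_closed by blast
  then show ?thesis
    unfolding ind_vec_rep[OF r a] indH_emb[OF k y r a] by (auto simp: ind_vec_def smul_smul field_simps)
qed

lemma H_covariant_ind_vec: "H_covariant g BU \<rho> ind_vec"
  unfolding H_covariant_def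
proof (intro ballI)
  fix k y l and a :: "'u \<Rightarrow> 'k" assume k: "k \<in> carrier G" and y: "y \<in> carrier L" and l: "l \<in> carrier L" and a: "a \<in> fsp BU"
  define r where "r = lr l"
  define s where "s = inv r \<otimes> l"
  have P: "r \<in> R" "r \<in> carrier L" "s \<in> Lg" "s \<in> carrier L" "r \<otimes> s = l"
    using lr_props[OF l] Lg_closed unfolding r_def s_def by auto
  have act_yl: "act (y \<otimes> l) g = act (y \<otimes> r) g"
    using act_stab_mult[OF g_closed _ P(3), of "y \<otimes> r"] y P by (simp add: L.m_assoc)
  have nz: "\<sigma> (act l g) r s \<noteq> 0" using \<sigma>_nonzero g_closed l P by simp
  have "ind_vec r (\<rho>U s a) = smul (\<sigma> (act r g) r s) (ind_vec l a)"
    using twisted_balancedD[OF twisted_balanced_ind_vec P(2,3) a] P by simp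
  then have split: "ind_vec l a = smul (inverse (\<sigma> (act l g) r s)) (ind_vec r (\<rho>U s a))"
    using nz act_lr[OF l] by (simp add: r_def smul_smul)
  have "\<rho> k y (ind_vec l a) = (if k = act (y \<otimes> r) g then
      smul (inverse (\<sigma> (act l g) r s) * \<sigma> k y r) (ind_vec (y \<otimes> r) (\<rho>U s a)) else (\<lambda>_. 0))"
    using indH_ind_vec_rep[OF k y P(1) module_mem_fsp[OF P(3) a]] ind_vec_mem_fsp[OF P(2) module_mem_fsp[OF P(3) a]]
    by (simp add: split fsp_linear_smul[OF fsp_linear_indH] smul_smul)
  also have "\<dots> = (if k = act (y \<otimes> l) g then smul (\<sigma> k y l) (ind_vec (y \<otimes> l) a) else (\<lambda>_. 0))"
    using twisted_balancedD[OF twisted_balanced_ind_vec _ P(3) a, of "y \<otimes> r"] y P act_yl nz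
      \<sigma>_cocycle_act[OF g_closed y P(2,4)] act_lr[OF l]
    by (auto simp: smul_smul L.m_assoc r_def field_simps)
  finally show "\<rho> k y (ind_vec l a) = (if k = act (y \<otimes> l) g then smul (\<sigma> k y l) (ind_vec (y \<otimes> l) a) else (\<lambda>_. 0))" .
qed

end

subsection \<open>Induction in stages\<close>

lemma (in nested_subgroups) lin_indT:
  assumes lin_X: "\<And>s. s \<in> S \<Longrightarrow> lin BX BX (\<rho>X s)" and s: "s \<in> T"
  shows "lin (indT_basis L T S BX) (indT_basis L T S BX) (indT L T S c \<rho>X s)"
  unfolding indT_def
proof (rule lin_linext)
  fix p assume "p \<in> indT_basis L T S BX"
  then obtain t z where p: "p = (t, z)" "t \<in> R" "z \<in> BX" by (auto simp: indT_basis_def)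
  have "s \<otimes> t \<in> T" using s p ltrans_subset subgroup.m_closed[OF subgroup_T] by blast
  then show "(case p of (r, u) \<Rightarrow> let r' = lrep L T S (s \<otimes> r); s' = inv r' \<otimes> (s \<otimes> r)
      in smul (c s r / c r' s') (emb r' (\<rho>X s' (dl u)))) \<in> fsp (indT_basis L T S BX)"
    using p lrep_mem lrep_inv_mult_mem lin_X unfolding indT_basis_def
    by (auto simp: Let_def intro!: fsp_smul fsp_emb intro: lin_mem_fsp[OF lin_X fsp_dl])
qed

definition (in crossed_product) ind_family ::
    "'g \<Rightarrow> ('l \<Rightarrow> ('x \<Rightarrow> 'k) \<Rightarrow> ('m \<Rightarrow> 'k)) \<Rightarrow> 'l \<Rightarrow> ('l \<times> 'x \<Rightarrow> 'k) \<Rightarrow> ('m \<Rightarrow> 'k)" where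
  "ind_family g \<Psi> l = linext (\<lambda>(t, z). smul (\<sigma> (act l g) l t) (\<Psi> (l \<otimes> t) (dl z)))"

locale induction_in_stages = crossed_product L G act \<sigma> \<tau>
  for L :: "'l monoid" (structure) and G :: "'g monoid" and act :: "'l \<Rightarrow> 'g \<Rightarrow> 'g"
    and \<sigma> :: "'g \<Rightarrow> 'l \<Rightarrow> 'l \<Rightarrow> 'k::field" and \<tau> +
  fixes g :: 'g and K :: "'l set" and BX :: "'x set" and \<rho>X :: "'l \<Rightarrow> ('x \<Rightarrow> 'k) \<Rightarrow> ('x \<Rightarrow> 'k)"
  assumes g_closed: "g \<in> carrier G" and K_subgroup: "nested_subgroups L (stab L act g) K"
    and lin_X: "\<And>s. s \<in> K \<Longrightarrow> lin BX BX (\<rho>X s)"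
begin

sublocale K: nested_subgroups L "stab L act g" K
  by (rule K_subgroup)

sublocale U: induced_module L G act \<sigma> \<tau> g "indT_basis L (stab L act g) K BX" "indT L (stab L act g) K (\<sigma> g) \<rho>X"
  by (intro induced_module.intro induced_module_axioms.intro crossed_product_axioms g_closed K.lin_indT lin_X)

abbreviation "BU \<equiv> indT_basis L (stab L act g) K BX"
abbreviation "\<rho>U \<equiv> indT L (stab L act g) K (\<sigma> g) \<rho>X"

lemma K_closed: "s \<in> K \<Longrightarrow> s \<in> carrier L"
  using K.S_closed .

lemma indT_dl:
  "\<rho>U s (dl (t, z)) = smul (\<sigma> g s t / \<sigma> g (lrep L U.Lg K (s \<otimes> t)) (inv (lrep L U.Lg K (s \<otimes> t)) \<otimes> (s \<otimes> t)))
     (emb (lrep L U.Lg K (s \<otimes> t)) (\<rho>X (inv (lrep L U.Lg K (s \<otimes> t)) \<otimes> (s \<otimes> t)) (dl z)))"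
  by (simp add: indT_def Let_def)

lemma ind_family_dl: "ind_family g \<Psi> l (dl (t, z)) = smul (\<sigma> (act l g) l t) (\<Psi> (l \<otimes> t) (dl z))"
  by (simp add: ind_family_def)

lemma ind_family_emb:
  assumes "\<And>l. l \<in> carrier L \<Longrightarrow> lin BX BM (\<Psi> l)" "l \<in> carrier L" "t \<in> carrier L" "w \<in> fsp BX"
  shows "ind_family g \<Psi> l (emb t w) = smul (\<sigma> (act l g) l t) (\<Psi> (l \<otimes> t) w)"
  using assms linext_dl_eq[OF fsp_linear_scale[OF lin_fsp_linear], of BX BM "\<Psi> (l \<otimes> t)"]
  by (simp add: ind_family_def linext_emb[OF assms(4)])

lemma lin_ind_family:
  assumes "\<And>l. l \<in> carrier L \<Longrightarrow> lin BX BM (\<Psi> l)" "l \<in> carrier L"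
  shows "lin BU BM (ind_family g \<Psi> l)"
  unfolding ind_family_def
  using assms K.ltrans_closed by (intro lin_linext) (auto simp: indT_basis_def intro!: fsp_smul lin_mem_fsp[OF _ fsp_dl])

lemma H_covariant_ind_family:
  assumes lin: "\<And>l. l \<in> carrier L \<Longrightarrow> lin BX BM (\<Psi> l)" and lin_M: "\<And>k y. fsp_linear BM (\<rho>M k y)"
    and cov: "H_covariant g BX \<rho>M \<Psi>"
  shows "H_covariant g BU \<rho>M (ind_family g \<Psi>)"
  unfolding H_covariant_def
proof (intro ballI)
  fix k y l and u :: "'l \<times> 'x \<Rightarrow> 'k" assume k: "k \<in> carrier G" and y: "y \<in> carrier L" and l: "l \<in> carrier L" and u: "u \<in> fsp BU"
  show "\<rho>M k y (ind_family g \<Psi> l u) =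
      (if k = act (y \<otimes> l) g then smul (\<sigma> k y l) (ind_family g \<Psi> (y \<otimes> l) u) else (\<lambda>_. 0))"
  proof (rule fsp_linear_eqI[OF _ _ _ u])
    have lin_l: "lin BU BM (ind_family g \<Psi> l)" by (rule lin_ind_family[OF lin l])
    show "fsp_linear BU (\<lambda>u. \<rho>M k y (ind_family g \<Psi> l u))"
      using lin_fsp_linear[OF lin_l] lin_mem_fsp[OF lin_l] lin_M by (rule fsp_linear_comp)
    show "fsp_linear BU (\<lambda>u. if k = act (y \<otimes> l) g then smul (\<sigma> k y l) (ind_family g \<Psi> (y \<otimes> l) u) else (\<lambda>_. 0))"
      unfolding ind_family_def by (intro fsp_linear_if fsp_linear_scale fsp_linear_linext)
    fix p assume "p \<in> BU"
    then obtain t z where p: "p = (t, z)" "t \<in> U.Lg" "z \<in> BX"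
      using K.ltrans_subset by (auto simp: indT_basis_def)
    have t: "t \<in> carrier L" using p U.Lg_closed by blast
    have lt: "l \<otimes> t \<in> carrier L" using l t by simp
    have act_ylt: "act (y \<otimes> (l \<otimes> t)) g = act (y \<otimes> l) g"
      using act_stab_mult[OF g_closed _ p(2), of "y \<otimes> l"] y l t by (simp add: L.m_assoc)
    have "\<Psi> (l \<otimes> t) (dl z) \<in> fsp BM" by (rule lin_mem_fsp[OF lin[OF lt] fsp_dl[OF p(3)]])
    then have "\<rho>M k y (ind_family g \<Psi> l (dl p)) = smul (\<sigma> (act l g) l t) (\<rho>M k y (\<Psi> (l \<otimes> t) (dl z)))"
      by (simp add: p ind_family_dl fsp_linear_smul[OF lin_M])
    also have "\<dots> = (if k = act (y \<otimes> l) g then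
        smul (\<sigma> (act l g) l t * \<sigma> k y (l \<otimes> t)) (\<Psi> (y \<otimes> (l \<otimes> t)) (dl z)) else (\<lambda>_. 0))"
      unfolding H_covariantD[OF cov k y lt fsp_dl[OF p(3)]] act_ylt by (simp add: smul_smul)
    also have "\<dots> = (if k = act (y \<otimes> l) g then smul (\<sigma> k y l) (ind_family g \<Psi> (y \<otimes> l) (dl p)) else (\<lambda>_. 0))"
      using \<sigma>_cocycle_act[OF g_closed y l t] y l t
      by (simp add: p ind_family_dl smul_smul L.m_assoc mult.commute)
    finally show "\<rho>M k y (ind_family g \<Psi> l (dl p)) =
        (if k = act (y \<otimes> l) g then smul (\<sigma> k y l) (ind_family g \<Psi> (y \<otimes> l) (dl p)) else (\<lambda>_. 0))" .
  qed
qed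

lemma ind_family_indT_dl:
  assumes lin: "\<And>l. l \<in> carrier L \<Longrightarrow> lin BX BM (\<Psi> l)" and bal: "twisted_balanced g K BX \<rho>X \<Psi>"
    and l: "l \<in> carrier L" and s: "s \<in> U.Lg" and t: "t \<in> K.R" and z: "z \<in> BX"
  shows "ind_family g \<Psi> l (\<rho>U s (dl (t, z))) = smul (\<sigma> (act l g) l s) (ind_family g \<Psi> (l \<otimes> s) (dl (t, z)))"
proof -
  let ?h = "act l g"
  define t' where "t' = lrep L U.Lg K (s \<otimes> t)"
  define s' where "s' = inv t' \<otimes> (s \<otimes> t)"
  have tc: "t \<in> U.Lg" "t \<in> carrier L" and sc: "s \<in> carrier L"
    using t s K.ltrans_subset U.Lg_closed by auto
  have st: "s \<otimes> t \<in> U.Lg" using s tc stab_mult[OF g_closed] by blast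
  have P: "t' \<in> K.R" "t' \<in> U.Lg" "t' \<in> carrier L" "s' \<in> K" "s' \<in> carrier L" "t' \<otimes> s' = s \<otimes> t"
    using K.lrep_mem[OF st] K.lrep_inv_mult_mem[OF st] K.lrep_mult_cancel[OF st] K.ltrans_subset
      K.lrep_closed[OF st] K_closed unfolding t'_def s'_def by auto
  have w: "\<rho>X s' (dl z) \<in> fsp BX" using lin_mem_fsp[OF lin_X[OF P(4)] fsp_dl[OF z]] .
  have emb_mem: "emb t' (\<rho>X s' (dl z)) \<in> fsp BU"
    unfolding indT_basis_def by (rule fsp_emb[OF P(1) w])
  have act_lt': "act (l \<otimes> t') g = ?h" and act_ls: "act (l \<otimes> s) g = ?h"
    using act_stab_mult[OF g_closed l] P s by auto
  have "ind_family g \<Psi> l (\<rho>U s (dl (t, z))) = smul (\<sigma> g s t / \<sigma> g t' s') (ind_family g \<Psi> l (emb t' (\<rho>X s' (dl z))))"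
    unfolding ind_family_def fsp_linear_smul[OF fsp_linear_linext emb_mem, symmetric]
    by (simp add: indT_dl t'_def[symmetric] s'_def[symmetric])
  also have "\<dots> = smul (\<sigma> g s t / \<sigma> g t' s' * \<sigma> ?h l t') (\<Psi> (l \<otimes> t') (\<rho>X s' (dl z)))"
    by (simp add: ind_family_emb[where \<Psi> = \<Psi>, OF lin l P(3) w] smul_smul)
  also have "\<dots> = smul (\<sigma> ?h l s * \<sigma> ?h (l \<otimes> s) t) (\<Psi> (l \<otimes> s \<otimes> t) (dl z))"
    using twisted_balancedD[OF bal _ P(4) fsp_dl[OF z], of "l \<otimes> t'"] l P sc tc
      \<sigma>_cocycle_stab[OF g_closed l sc tc(2) P(3,5) s P(2,6)]
    by (simp add: act_lt' smul_smul L.m_assoc)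
  also have "\<dots> = smul (\<sigma> ?h l s) (ind_family g \<Psi> (l \<otimes> s) (dl (t, z)))"
    by (simp add: ind_family_dl act_ls smul_smul)
  finally show ?thesis .
qed

lemma twisted_balanced_ind_family:
  assumes lin: "\<And>l. l \<in> carrier L \<Longrightarrow> lin BX BM (\<Psi> l)" and bal: "twisted_balanced g K BX \<rho>X \<Psi>"
  shows "twisted_balanced g U.Lg BU \<rho>U (ind_family g \<Psi>)"
  unfolding twisted_balanced_def
proof (intro ballI)
  fix l s and v :: "'l \<times> 'x \<Rightarrow> 'k" assume l: "l \<in> carrier L" and s: "s \<in> U.Lg" and v: "v \<in> fsp BU"
  show "ind_family g \<Psi> l (\<rho>U s v) = smul (\<sigma> (act l g) l s) (ind_family g \<Psi> (l \<otimes> s) v)"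
  proof (rule fsp_linear_eqI[OF _ _ _ v])
    have lin_l: "lin BU BM (ind_family g \<Psi> l)" by (rule lin_ind_family[OF lin l])
    show "fsp_linear BU (\<lambda>v. ind_family g \<Psi> l (\<rho>U s v))"
      using U.fsp_linear_module[OF s] lin_mem_fsp[OF U.lin_module[OF s]] lin_fsp_linear[OF lin_l]
      by (rule fsp_linear_comp)
    show "fsp_linear BU (\<lambda>v. smul (\<sigma> (act l g) l s) (ind_family g \<Psi> (l \<otimes> s) v))"
      unfolding ind_family_def by (intro fsp_linear_scale fsp_linear_linext)
    fix p assume "p \<in> BU"
    then show "ind_family g \<Psi> l (\<rho>U s (dl p)) = smul (\<sigma> (act l g) l s) (ind_family g \<Psi> (l \<otimes> s) (dl p))"
      using ind_family_indT_dl[OF lin bal l s] by (auto simp: indT_basis_def)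
  qed
qed

lemma indH_hom_ind_family:
  assumes lin: "\<And>l. l \<in> carrier L \<Longrightarrow> lin BX BM (\<Psi> l)" and lin_M: "\<And>k y. fsp_linear BM (\<rho>M k y)"
    and cov: "H_covariant g BX \<rho>M \<Psi>" and bal: "twisted_balanced g K BX \<rho>X \<Psi>"
    and k: "k \<in> carrier G" and y: "y \<in> carrier L" and v: "v \<in> fsp U.BI"
  shows "linext (\<lambda>(r, u). ind_family g \<Psi> r (dl u)) (U.\<rho> k y v)
    = \<rho>M k y (linext (\<lambda>(r, u). ind_family g \<Psi> r (dl u)) v)"
  using lin_ind_family[OF lin] lin_M H_covariant_ind_family[OF lin lin_M cov]
    twisted_balanced_ind_family[OF lin bal] k y v
  by (rule U.indH_hom_of_family)

end

section \<open>The Mackey decomposition\<close>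

locale mackey_setting = crossed_product L G act \<sigma> \<tau>
  for L :: "'l monoid" (structure) and G :: "'g monoid" and act :: "'l \<Rightarrow> 'g \<Rightarrow> 'g"
    and \<sigma> :: "'g \<Rightarrow> 'l \<Rightarrow> 'l \<Rightarrow> 'k::field" and \<tau> +
  fixes gi gj :: 'g and BV :: "'b set" and \<rho>V :: "'l \<Rightarrow> ('b \<Rightarrow> 'k) \<Rightarrow> ('b \<Rightarrow> 'k)"
    and BW :: "'c set" and \<rho>W :: "'l \<Rightarrow> ('c \<Rightarrow> 'k) \<Rightarrow> ('c \<Rightarrow> 'k)" and D :: "'l set"
  assumes gi_closed: "gi \<in> carrier G" and gj_closed: "gj \<in> carrier G"
    and twisted_V: "tw_mod L (stab L act gi) (\<sigma> gi) BV \<rho>V"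
    and twisted_W: "tw_mod L (stab L act gj) (\<sigma> gj) BW \<rho>W"
    and double_coset_reps: "dcoset_reps L (stab L act gi) (stab L act gj) D"
begin

sublocale V: twisted_induced_module L G act \<sigma> \<tau> gi BV \<rho>V
  using twisted_V gi_closed
  by (intro twisted_induced_module.intro induced_module.intro induced_module_axioms.intro
      twisted_induced_module_axioms.intro crossed_product_axioms) (auto simp: tw_mod_def)

sublocale W: twisted_induced_module L G act \<sigma> \<tau> gj BW \<rho>W
  using twisted_W gj_closed
  by (intro twisted_induced_module.intro induced_module.intro induced_module_axioms.intro
      twisted_induced_module_axioms.intro crossed_product_axioms) (auto simp: tw_mod_def)

abbreviation "\<rho>M \<equiv> tensH G \<tau> V.\<rho> W.\<rho>"
abbreviation "BM \<equiv> tensH_basis V.BI W.BI"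
abbreviation "BX \<equiv> BV \<times> BW"

definition tens_action :: "'g \<Rightarrow> 'l \<Rightarrow> ('l \<times> 'b \<Rightarrow> 'k) \<Rightarrow> ('l \<times> 'c \<Rightarrow> 'k) \<Rightarrow> ('l \<times> 'b) \<times> ('l \<times> 'c) \<Rightarrow> 'k" where
  "tens_action k y a b = (\<lambda>p. \<Sum>h\<in>carrier G. \<Sum>h'\<in>carrier G.
      if h \<otimes>\<^bsub>G\<^esub> h' = k then \<tau> h h' y * vt (V.\<rho> h y a) (W.\<rho> h' y b) p else 0)"

lemma fsp_bilinear_tens_action: "fsp_bilinear V.BI W.BI (tens_action k y)"
  unfolding fsp_bilinear_def tens_action_def using finite_G
  by (intro conjI ballI fsp_linear_sum_fun fsp_linear_if_scale fsp_linear_vt_left fsp_linear_vt_right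
      V.fsp_linear_indH W.fsp_linear_indH)

lemma tensH_vt: "a \<in> fsp V.BI \<Longrightarrow> b \<in> fsp W.BI \<Longrightarrow> \<rho>M k y (vt a b) = tens_action k y a b"
  using linext_vt[OF fsp_bilinear_tens_action] by (simp add: tensH_def tens_action_def)

lemma fsp_linear_tensH: "fsp_linear BM (\<rho>M k y)"
  by (simp add: tensH_def fsp_linear_linext)

lemma tensH_ind_vec:
  assumes k: "k \<in> carrier G" and y: "y \<in> carrier L" and l1: "l1 \<in> carrier L" and l2: "l2 \<in> carrier L"
    and a: "a \<in> fsp BV" and b: "b \<in> fsp BW"
  defines "A \<equiv> act (y \<otimes> l1) gi" and "B \<equiv> act (y \<otimes> l2) gj"
  shows "\<rho>M k y (vt (V.ind_vec l1 a) (W.ind_vec l2 b)) =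
    (if k = A \<otimes>\<^bsub>G\<^esub> B then smul (\<tau> A B y * \<sigma> A y l1 * \<sigma> B y l2)
       (vt (V.ind_vec (y \<otimes> l1) a) (W.ind_vec (y \<otimes> l2) b)) else (\<lambda>_. 0))"
proof -
  have AB: "A \<in> carrier G" "B \<in> carrier G" using y l1 l2 gi_closed gj_closed by (auto simp: A_def B_def)
  have "\<rho>M k y (vt (V.ind_vec l1 a) (W.ind_vec l2 b)) = (\<lambda>p. \<Sum>h\<in>carrier G. \<Sum>h'\<in>carrier G.
      if h = A \<and> h' = B \<and> k = A \<otimes>\<^bsub>G\<^esub> B then \<tau> h h' y * (\<sigma> A y l1 * \<sigma> B y l2)
        * vt (V.ind_vec (y \<otimes> l1) a) (W.ind_vec (y \<otimes> l2) b) p else 0)"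
    unfolding tensH_vt[OF V.ind_vec_mem_fsp[OF l1 a] W.ind_vec_mem_fsp[OF l2 b]] tens_action_def
    using H_covariantD[OF V.H_covariant_ind_vec _ y l1 a] H_covariantD[OF W.H_covariant_ind_vec _ y l2 b]
    by (intro ext sum.cong refl) (auto simp: A_def B_def vt_def smul_def mult_ac)
  then show ?thesis
    using AB finite_G by (simp add: sum_sum_delta fun_eq_iff smul_def mult.assoc)
qed

text \<open>In the notation of the paper, \<open>gprod x = g\<^sub>i \<^sup>xg\<^sub>j\<close>, \<open>Kx x = L\<^sub>i \<inter> \<^sup>xL\<^sub>j\<close> and
  \<open>tens_res x = V\<down> \<otimes> \<^sup>xW\<down>\<close>, so that \<open>U(x)\<close> is \<open>tens_res x\<close> induced to \<open>Lx x\<close>.\<close>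

abbreviation "gprod x \<equiv> gi \<otimes>\<^bsub>G\<^esub> act x gj"
abbreviation "Lx x \<equiv> stab L act (gprod x)"
abbreviation "Kx x \<equiv> stab L act gi \<inter> stab L act (act x gj)"
abbreviation "tens_res x \<equiv> tens_psi \<tau> gi (act x gj) \<rho>V (conjmod G L act \<sigma> x gj \<rho>W)"

lemma gprod_closed: "x \<in> carrier L \<Longrightarrow> gprod x \<in> carrier G"
  using gi_closed gj_closed by simp

text \<open>\<open>mackey_vec x l (v \<otimes> w)\<close> is \<open>lbar (p\<^bsub>g\<^sub>i\<^esub> \<otimes> v) \<otimes> lbar xbar (p\<^bsub>g\<^sub>j\<^esub> \<otimes> w)\<close>: the scalar comes from
  \<open>\<Delta>(lbar)\<close> and from \<open>lbar xbar = \<sigma>(l, x) (l x)bar\<close>.\<close>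

definition mackey_scalar :: "'l \<Rightarrow> 'l \<Rightarrow> 'k" where
  "mackey_scalar x l = \<tau> (act l gi) (act (l \<otimes> x) gj) l * \<sigma> (act (l \<otimes> x) gj) l x"

definition mackey_vec :: "'l \<Rightarrow> 'l \<Rightarrow> ('b \<times> 'c \<Rightarrow> 'k) \<Rightarrow> ('l \<times> 'b) \<times> ('l \<times> 'c) \<Rightarrow> 'k" where
  "mackey_vec x l = linext (\<lambda>(v, w).
     smul (mackey_scalar x l) (vt (V.ind_vec l (dl v)) (W.ind_vec (l \<otimes> x) (dl w))))"

lemma mackey_scalar_nonzero: "x \<in> carrier L \<Longrightarrow> l \<in> carrier L \<Longrightarrow> mackey_scalar x l \<noteq> 0"
  unfolding mackey_scalar_def using \<tau>_nonzero \<sigma>_nonzero gi_closed gj_closed by auto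

lemma mackey_vec_vt:
  assumes x: "x \<in> carrier L" and l: "l \<in> carrier L" and a: "a \<in> fsp BV" and b: "b \<in> fsp BW"
  shows "mackey_vec x l (vt a b) = smul (mackey_scalar x l) (vt (V.ind_vec l a) (W.ind_vec (l \<otimes> x) b))"
proof -
  have "fsp_bilinear BV BW (\<lambda>a b. smul (mackey_scalar x l) (vt (V.ind_vec l a) (W.ind_vec (l \<otimes> x) b)))"
    unfolding fsp_bilinear_def using x l
    by (intro conjI ballI fsp_linear_scale fsp_linear_vt_left fsp_linear_vt_right
        V.fsp_linear_ind_vec W.fsp_linear_ind_vec) auto
  then show ?thesis unfolding mackey_vec_def by (rule linext_vt[OF _ a b])
qed

lemma mackey_vec_dl:
  "x \<in> carrier L \<Longrightarrow> l \<in> carrier L \<Longrightarrow> v \<in> BV \<Longrightarrow> w \<in> BW \<Longrightarrow>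
    mackey_vec x l (dl (v, w)) = smul (mackey_scalar x l) (vt (V.ind_vec l (dl v)) (W.ind_vec (l \<otimes> x) (dl w)))"
  by (simp add: mackey_vec_def)

lemma lin_mackey_vec: "x \<in> carrier L \<Longrightarrow> l \<in> carrier L \<Longrightarrow> lin BX BM (mackey_vec x l)"
  unfolding mackey_vec_def tensH_basis_def
  by (intro lin_linext) (auto intro!: fsp_smul fsp_vt V.ind_vec_mem_fsp W.ind_vec_mem_fsp)

lemma mackey_scalar_covariant:
  assumes x: "x \<in> carrier L" and y: "y \<in> carrier L" and l: "l \<in> carrier L"
  defines "A \<equiv> act (y \<otimes> l) gi" and "B \<equiv> act (y \<otimes> l \<otimes> x) gj"
  shows "mackey_scalar x l * (\<tau> A B y * \<sigma> A y l * \<sigma> B y (l \<otimes> x)) = \<sigma> (A \<otimes>\<^bsub>G\<^esub> B) y l * mackey_scalar x (y \<otimes> l)"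
proof -
  let ?A' = "act l gi" and ?B' = "act (l \<otimes> x) gj"
  have AB: "A \<in> carrier G" "B \<in> carrier G" and A': "act (inv y) A = ?A'" and B': "act (inv y) B = ?B'"
    using x y l gi_closed gj_closed by (auto simp: A_def B_def act_mult)
  have c1: "\<sigma> B y l * \<sigma> B (y \<otimes> l) x = \<sigma> ?B' l x * \<sigma> B y (l \<otimes> x)"
    using \<sigma>_cocycle[OF AB(2) y l x] B' by simp
  have c2: "\<sigma> A y l * \<sigma> B y l * \<tau> A B y * \<tau> ?A' ?B' l = \<sigma> (A \<otimes>\<^bsub>G\<^esub> B) y l * \<tau> A B (y \<otimes> l)"
    using \<sigma>_\<tau>_compat[OF AB y l] A' B' by simp
  have "mackey_scalar x l * (\<tau> A B y * \<sigma> A y l * \<sigma> B y (l \<otimes> x))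
      = (\<sigma> A y l * \<sigma> B y l * \<tau> A B y * \<tau> ?A' ?B' l) * \<sigma> B (y \<otimes> l) x"
    unfolding mackey_scalar_def using c1 by (simp add: mult_ac)
  also have "\<dots> = \<sigma> (A \<otimes>\<^bsub>G\<^esub> B) y l * mackey_scalar x (y \<otimes> l)"
    unfolding c2 mackey_scalar_def using x y l by (simp add: A_def B_def L.m_assoc mult_ac)
  finally show ?thesis .
qed

lemma H_covariant_mackey_vec:
  assumes x: "x \<in> carrier L"
  shows "H_covariant (gprod x) BX \<rho>M (mackey_vec x)"
  unfolding H_covariant_def
proof (intro ballI)
  fix k y l and u :: "'b \<times> 'c \<Rightarrow> 'k"
  assume k: "k \<in> carrier G" and y: "y \<in> carrier L" and l: "l \<in> carrier L" and u: "u \<in> fsp BX"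
  show "\<rho>M k y (mackey_vec x l u) =
      (if k = act (y \<otimes> l) (gprod x) then smul (\<sigma> k y l) (mackey_vec x (y \<otimes> l) u) else (\<lambda>_. 0))"
  proof (rule fsp_linear_eqI[OF _ _ _ u])
    show "fsp_linear BX (\<lambda>u. \<rho>M k y (mackey_vec x l u))"
      using lin_fsp_linear[OF lin_mackey_vec[OF x l]] lin_mem_fsp[OF lin_mackey_vec[OF x l]] fsp_linear_tensH
      by (rule fsp_linear_comp)
    show "fsp_linear BX (\<lambda>u. if k = act (y \<otimes> l) (gprod x) then smul (\<sigma> k y l) (mackey_vec x (y \<otimes> l) u) else (\<lambda>_. 0))"
      unfolding mackey_vec_def by (intro fsp_linear_if fsp_linear_scale fsp_linear_linext)
    fix p assume "p \<in> BX"
    then obtain v w where p: "p = (v, w)" "v \<in> BV" "w \<in> BW" by auto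
    have lx: "l \<otimes> x \<in> carrier L" and yl: "y \<otimes> l \<in> carrier L" using l x y by auto
    have AB: "act (y \<otimes> l) gi \<otimes>\<^bsub>G\<^esub> act (y \<otimes> l \<otimes> x) gj = act (y \<otimes> l) (gprod x)"
      using x y l gi_closed gj_closed by (simp add: act_hom act_mult)
    have vt_mem: "vt (V.ind_vec l (dl v)) (W.ind_vec (l \<otimes> x) (dl w)) \<in> fsp BM"
      unfolding tensH_basis_def using p l lx by (intro fsp_vt V.ind_vec_mem_fsp W.ind_vec_mem_fsp) auto
    have assoc: "y \<otimes> (l \<otimes> x) = y \<otimes> l \<otimes> x" using x y l by (simp add: L.m_assoc)
    show "\<rho>M k y (mackey_vec x l (dl p)) =
        (if k = act (y \<otimes> l) (gprod x) then smul (\<sigma> k y l) (mackey_vec x (y \<otimes> l) (dl p)) else (\<lambda>_. 0))"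
      using tensH_ind_vec[OF k y l lx fsp_dl[OF p(2)] fsp_dl[OF p(3)], unfolded assoc]
        mackey_scalar_covariant[OF x y l] AB
      by (simp add: p mackey_vec_dl x l yl fsp_linear_smul[OF fsp_linear_tensH vt_mem] smul_smul)
  qed
qed

lemma conj_mem_stab: "x \<in> carrier L \<Longrightarrow> s \<in> Kx x \<Longrightarrow> inv x \<otimes> s \<otimes> x \<in> W.Lg"
  using conj_mem_stab_iff[OF _ gj_closed, of x s] stab_closed by blast

lemma tens_res_dl:
  assumes "x \<in> carrier L" "s \<in> Kx x"
  shows "tens_res x s (dl (v, w)) = smul (\<tau> gi (act x gj) s * (\<sigma> (act x gj) s x / \<sigma> (act x gj) x (inv x \<otimes> s \<otimes> x)))
     (vt (\<rho>V s (dl v)) (\<rho>W (inv x \<otimes> s \<otimes> x) (dl w)))"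
  using conjmod_eq[OF assms(1) gj_closed, of s \<rho>W "dl w"] assms(2)
  by (simp add: tens_psi_def vt_smul_right smul_smul)

lemma lin_tens_res: "x \<in> carrier L \<Longrightarrow> s \<in> Kx x \<Longrightarrow> lin BX BX (tens_res x s)"
  unfolding tens_psi_def
  by (intro lin_linext)
    (auto simp: conjmod_eq[OF _ gj_closed] intro!: fsp_smul fsp_vt V.module_mem_fsp W.module_mem_fsp conj_mem_stab)

lemma mackey_scalar_balanced:
  assumes x: "x \<in> carrier L" and l: "l \<in> carrier L" and s: "s \<in> Kx x"
  defines "h \<equiv> act x gj" and "y \<equiv> inv x \<otimes> s \<otimes> x"
  shows "\<tau> gi h s * (\<sigma> h s x / \<sigma> h x y) * mackey_scalar x l * \<sigma> (act l gi) l s * \<sigma> (act (l \<otimes> x) gj) (l \<otimes> x) y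
    = \<sigma> (act l (gprod x)) l s * mackey_scalar x (l \<otimes> s)"
proof -
  let ?A = "act l gi" and ?B = "act (l \<otimes> x) gj"
  have sc: "s \<in> carrier L" and yc: "y \<in> carrier L" and hc: "h \<in> carrier G"
    using s x gj_closed stab_closed[OF conj_mem_stab[OF x s]] by (auto simp: y_def h_def stab_def)
  have AB: "?A \<in> carrier G" "?B \<in> carrier G" and Bh: "?B = act l h"
    using l x gi_closed gj_closed by (auto simp: h_def act_mult)
  have AA: "act (inv l) ?A = gi" and BB: "act (inv l) ?B = h" using l gi_closed hc Bh by auto
  have xy: "x \<otimes> y = s \<otimes> x" using x sc by (simp add: y_def L.m_assoc)
  have Als: "act (l \<otimes> s) gi = ?A" and Blsx: "act (l \<otimes> s \<otimes> x) gj = ?B"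
    using l sc x gi_closed gj_closed s Bh by (auto simp: act_mult stab_def h_def)
  have AhB: "act l (gprod x) = ?A \<otimes>\<^bsub>G\<^esub> ?B" using l gi_closed hc Bh by (simp add: act_hom h_def)
  have tc: "\<sigma> ?A l s * \<sigma> ?B l s * \<tau> ?A ?B l * \<tau> gi h s = \<sigma> (?A \<otimes>\<^bsub>G\<^esub> ?B) l s * \<tau> ?A ?B (l \<otimes> s)"
    using \<sigma>_\<tau>_compat[OF AB l sc] AA BB by simp
  have c1: "\<sigma> ?B l x * \<sigma> ?B (l \<otimes> x) y = \<sigma> h x y * \<sigma> ?B l (s \<otimes> x)"
    using \<sigma>_cocycle[OF AB(2) l x yc] BB xy by simp
  have c2: "\<sigma> ?B l s * \<sigma> ?B (l \<otimes> s) x = \<sigma> h s x * \<sigma> ?B l (s \<otimes> x)"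
    using \<sigma>_cocycle[OF AB(2) l sc x] BB by simp
  have nz: "\<sigma> h x y \<noteq> 0" using \<sigma>_nonzero hc x yc by auto
  have "\<tau> gi h s * (\<sigma> h s x / \<sigma> h x y) * mackey_scalar x l * \<sigma> ?A l s * \<sigma> ?B (l \<otimes> x) y
      = \<tau> gi h s * \<sigma> h s x * \<tau> ?A ?B l * \<sigma> ?A l s * (\<sigma> ?B l x * \<sigma> ?B (l \<otimes> x) y) / \<sigma> h x y"
    unfolding mackey_scalar_def by (simp add: mult_ac)
  also have "\<dots> = \<tau> gi h s * \<sigma> ?A l s * \<tau> ?A ?B l * (\<sigma> h s x * \<sigma> ?B l (s \<otimes> x))"
    unfolding c1 using nz by (simp add: mult_ac)
  also have "\<dots> = \<sigma> (?A \<otimes>\<^bsub>G\<^esub> ?B) l s * \<tau> ?A ?B (l \<otimes> s) * \<sigma> ?B (l \<otimes> s) x"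
    unfolding c2[symmetric] tc[symmetric] by (simp add: mult_ac)
  also have "\<dots> = \<sigma> (act l (gprod x)) l s * mackey_scalar x (l \<otimes> s)"
    unfolding mackey_scalar_def AhB Als Blsx by (simp add: mult_ac)
  finally show ?thesis .
qed

lemma mackey_vec_tens_res_dl:
  assumes x: "x \<in> carrier L" and l: "l \<in> carrier L" and s: "s \<in> Kx x" and v: "v \<in> BV" and w: "w \<in> BW"
  shows "mackey_vec x l (tens_res x s (dl (v, w))) = smul (\<sigma> (act l (gprod x)) l s) (mackey_vec x (l \<otimes> s) (dl (v, w)))"
proof -
  define y where "y = inv x \<otimes> s \<otimes> x"
  have sV: "s \<in> V.Lg" and sc: "s \<in> carrier L" and yW: "y \<in> W.Lg"
    using s conj_mem_stab[OF x s] stab_closed unfolding y_def by auto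
  have lx: "l \<otimes> x \<in> carrier L" and ls: "l \<otimes> s \<in> carrier L" using l x sc by auto
  have lxy: "l \<otimes> x \<otimes> y = l \<otimes> s \<otimes> x" using l x sc by (simp add: y_def L.m_assoc)
  have a: "\<rho>V s (dl v) \<in> fsp BV" and b: "\<rho>W y (dl w) \<in> fsp BW"
    using V.module_mem_fsp[OF sV] W.module_mem_fsp[OF yW] v w by auto
  have "mackey_vec x l (tens_res x s (dl (v, w))) = smul (\<tau> gi (act x gj) s * (\<sigma> (act x gj) s x / \<sigma> (act x gj) x y))
      (mackey_vec x l (vt (\<rho>V s (dl v)) (\<rho>W y (dl w))))"
    using tens_res_dl[OF x s, folded y_def] fsp_linear_smul[OF lin_fsp_linear[OF lin_mackey_vec[OF x l]] fsp_vt[OF a b]]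
    by simp
  also have "\<dots> = smul (\<sigma> (act l (gprod x)) l s) (mackey_vec x (l \<otimes> s) (dl (v, w)))"
    using twisted_balancedD[OF V.twisted_balanced_ind_vec l sV fsp_dl[OF v]]
      twisted_balancedD[OF W.twisted_balanced_ind_vec lx yW fsp_dl[OF w]]
      mackey_scalar_balanced[OF x l s, folded y_def]
    by (simp add: mackey_vec_vt[OF x l a b] mackey_vec_dl[OF x ls v w] lxy
        vt_smul_left vt_smul_right smul_smul mult_ac)
  finally show ?thesis .
qed

lemma twisted_balanced_mackey_vec:
  assumes x: "x \<in> carrier L"
  shows "twisted_balanced (gprod x) (Kx x) BX (tens_res x) (mackey_vec x)"
  unfolding twisted_balanced_def
proof (intro ballI)
  fix l s and u :: "'b \<times> 'c \<Rightarrow> 'k" assume l: "l \<in> carrier L" and s: "s \<in> Kx x" and u: "u \<in> fsp BX"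
  show "mackey_vec x l (tens_res x s u) = smul (\<sigma> (act l (gprod x)) l s) (mackey_vec x (l \<otimes> s) u)"
  proof (rule fsp_linear_eqI[OF _ _ _ u])
    show "fsp_linear BX (\<lambda>u. mackey_vec x l (tens_res x s u))"
      using lin_fsp_linear[OF lin_tens_res[OF x s]] lin_mem_fsp[OF lin_tens_res[OF x s]]
        lin_fsp_linear[OF lin_mackey_vec[OF x l]] by (rule fsp_linear_comp)
    show "fsp_linear BX (\<lambda>u. smul (\<sigma> (act l (gprod x)) l s) (mackey_vec x (l \<otimes> s) u))"
      unfolding mackey_vec_def by (intro fsp_linear_scale fsp_linear_linext)
  qed (auto simp: mackey_vec_tens_res_dl[OF x l s])
qed

abbreviation "\<rho>Ux x \<equiv> Ux G L act \<sigma> \<tau> gi gj \<rho>V \<rho>W x"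
abbreviation "BUx x \<equiv> Ux_basis G L act gi gj BV BW x"
abbreviation "BIx x \<equiv> indH_basis L act (gprod x) (BUx x)"
abbreviation "\<rho>Ix x \<equiv> indH G L act \<sigma> (gprod x) (\<rho>Ux x)"
abbreviation "BR \<equiv> dsum_basis D BIx"
abbreviation "\<rho>R \<equiv> dsum D \<rho>Ix"

lemma D_closed: "x \<in> D \<Longrightarrow> x \<in> carrier L"
  using double_coset_reps by (auto simp: dcoset_reps_def)

lemma finite_D: "finite D"
  using double_coset_reps finite_L by (auto simp: dcoset_reps_def intro: finite_subset)

lemma Ux_eq: "\<rho>Ux x = indT L (Lx x) (Kx x) (\<sigma> (gprod x)) (tens_res x)"
  by (simp add: Ux_def Let_def)

lemma Ux_basis_eq: "BUx x = indT_basis L (Lx x) (Kx x) BX"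
  by (simp add: Ux_basis_def Let_def)

lemma induction_in_stages_summand: "x \<in> carrier L \<Longrightarrow> induction_in_stages L G act \<sigma> \<tau> (gprod x) (Kx x) BX (tens_res x)"
  using gi_closed gj_closed stab_inter_subset[OF gi_closed, of "act x gj"]
  by (intro induction_in_stages.intro induction_in_stages_axioms.intro crossed_product_axioms
      nested_subgroups.intro nested_subgroups_axioms.intro L.is_group stab_subgroup
      L.subgroups_Inter_pair lin_tens_res) auto

definition block_map :: "'l \<Rightarrow> ('l \<times> 'l \<times> 'b \<times> 'c \<Rightarrow> 'k) \<Rightarrow> ('l \<times> 'b) \<times> ('l \<times> 'c) \<Rightarrow> 'k" where
  "block_map x = linext (\<lambda>(r, u). ind_family (gprod x) (mackey_vec x) r (dl u))"

definition mackey_map :: "('l \<times> 'l \<times> 'l \<times> 'b \<times> 'c \<Rightarrow> 'k) \<Rightarrow> ('l \<times> 'b) \<times> ('l \<times> 'c) \<Rightarrow> 'k" where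
  "mackey_map v = (\<lambda>p. \<Sum>x\<in>D. block_map x (\<lambda>b. v (x, b)) p)"

lemma block_map_hom:
  assumes x: "x \<in> carrier L" and k: "k \<in> carrier G" and y: "y \<in> carrier L" and w: "w \<in> fsp (BIx x)"
  shows "block_map x (\<rho>Ix x k y w) = \<rho>M k y (block_map x w)"
proof -
  interpret S: induction_in_stages L G act \<sigma> \<tau> "gprod x" "Kx x" BX "tens_res x"
    by (rule induction_in_stages_summand[OF x])
  show ?thesis
    using S.indH_hom_ind_family[where \<Psi> = "mackey_vec x", OF lin_mackey_vec[OF x] fsp_linear_tensH H_covariant_mackey_vec[OF x]
        twisted_balanced_mackey_vec[OF x] k y] w
    by (simp add: block_map_def Ux_eq Ux_basis_eq)
qed

lemma block_map_mem_fsp: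
  assumes x: "x \<in> carrier L" and w: "w \<in> fsp (BIx x)"
  shows "block_map x w \<in> fsp BM"
proof -
  interpret S: induction_in_stages L G act \<sigma> \<tau> "gprod x" "Kx x" BX "tens_res x"
    by (rule induction_in_stages_summand[OF x])
  have "ind_family (gprod x) (mackey_vec x) r (dl u) \<in> fsp BM" if "r \<in> S.U.R" "u \<in> S.BU" for r u
    using S.lin_ind_family[where \<Psi> = "mackey_vec x", OF lin_mackey_vec[OF x] S.U.T.ltrans_closed[OF that(1)]] that(2)
    by (simp add: lin_mem_fsp)
  then show ?thesis
    using w unfolding block_map_def by (intro linext_mem_fsp) (auto simp: Ux_basis_eq indH_basis_def)
qed

lemma fsp_linear_block_map: "fsp_linear B (block_map x)"
  unfolding block_map_def by (rule fsp_linear_linext)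

lemma slice_mem_fsp:
  assumes v: "v \<in> fsp BR"
  shows "(\<lambda>b. v (x, b)) \<in> fsp (BIx x)"
proof -
  have "{b. v (x, b) \<noteq> 0} \<subseteq> snd ` {p. v p \<noteq> 0}" by force
  then have "finite {b. v (x, b) \<noteq> 0}" using v finite_subset by (auto simp: fsp_def)
  then show ?thesis using v by (auto simp: fsp_def dsum_basis_def)
qed

lemma fsp_linear_mackey_map: "fsp_linear BR mackey_map"
  unfolding mackey_map_def fsp_linear_def
  using fsp_linear_add[OF fsp_linear_block_map slice_mem_fsp slice_mem_fsp]
    fsp_linear_smul[OF fsp_linear_block_map slice_mem_fsp]
  by (auto simp: sum.distrib smul_def sum_distrib_left fun_eq_iff)

lemma mackey_map_mem_fsp: "v \<in> fsp BR \<Longrightarrow> mackey_map v \<in> fsp BM"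
  unfolding mackey_map_def using finite_D D_closed by (intro fsp_sum block_map_mem_fsp slice_mem_fsp) auto

lemma mackey_map_hom:
  assumes k: "k \<in> carrier G" and y: "y \<in> carrier L" and v: "v \<in> fsp BR"
  shows "mackey_map (\<rho>R k y v) = \<rho>M k y (mackey_map v)"
proof -
  have "mackey_map (\<rho>R k y v) = (\<lambda>p. \<Sum>x\<in>D. \<rho>M k y (block_map x (\<lambda>b. v (x, b))) p)"
    unfolding mackey_map_def dsum_def
    using block_map_hom[OF D_closed k y slice_mem_fsp[OF v]] by (intro ext sum.cong) simp_all
  also have "\<dots> = \<rho>M k y (mackey_map v)"
    unfolding mackey_map_def using finite_D D_closed
    by (intro fsp_linear_sum[OF fsp_linear_tensH, symmetric] block_map_mem_fsp slice_mem_fsp[OF v]) auto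
  finally show ?thesis .
qed

lemma dsum_action_mem_fsp:
  assumes y: "y \<in> carrier L" and v: "v \<in> fsp BR"
  shows "\<rho>R k y v \<in> fsp BR"
proof -
  have "\<rho>R k y v = (\<lambda>p. \<Sum>x\<in>D. emb x (\<rho>Ix x k y (\<lambda>b. v (x, b))) p)"
    using finite_D by (auto simp: dsum_def emb_def sum.delta fun_eq_iff)
  also have "\<dots> \<in> fsp BR"
  proof (intro fsp_sum finite_D)
    fix x assume x: "x \<in> D"
    interpret S: induction_in_stages L G act \<sigma> \<tau> "gprod x" "Kx x" BX "tens_res x"
      by (rule induction_in_stages_summand[OF D_closed[OF x]])
    have "\<rho>Ix x k y (\<lambda>b. v (x, b)) \<in> fsp (BIx x)"
      using S.U.indH_mem_fsp[OF y] slice_mem_fsp[OF v, of x] by (simp add: Ux_eq Ux_basis_eq)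
    then have "emb x (\<rho>Ix x k y (\<lambda>b. v (x, b))) \<in> fsp ({x} \<times> BIx x)" by (intro fsp_emb) auto
    then show "emb x (\<rho>Ix x k y (\<lambda>b. v (x, b))) \<in> fsp BR"
      by (rule fsp_mono) (use x in \<open>auto simp: dsum_basis_def\<close>)
  qed
  finally show ?thesis .
qed

subsection \<open>Mackey's bijection\<close>

definition over_block :: "'l \<Rightarrow> 'l \<Rightarrow> 'l \<Rightarrow> 'l \<Rightarrow> bool" where
  "over_block x l r1 r2 \<longleftrightarrow> V.lr l = r1 \<and> W.lr (l \<otimes> x) = r2"

lemma over_block_dcoset:
  assumes x: "x \<in> carrier L" and l: "l \<in> carrier L" and ob: "over_block x l r1 r2"
  shows "inv r1 \<otimes> r2 \<in> dcoset L V.Lg x W.Lg"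
proof -
  have lx: "l \<otimes> x \<in> carrier L" using l x by simp
  have r1: "r1 \<in> carrier L" and a: "inv r1 \<otimes> l \<in> V.Lg"
    using V.lr_props[OF l] ob by (auto simp: over_block_def)
  have r2: "r2 \<in> carrier L" and b: "inv r2 \<otimes> (l \<otimes> x) \<in> W.Lg"
    using W.lr_props[OF lx] ob by (auto simp: over_block_def)
  have "inv r1 \<otimes> r2 = (inv r1 \<otimes> l) \<otimes> x \<otimes> inv (inv r2 \<otimes> (l \<otimes> x))"
    using r1 r2 l x by (simp add: L.inv_mult_group L.m_assoc)
  then show ?thesis using a stab_inv[OF gj_closed b] unfolding dcoset_def by blast
qed

lemma over_block_unique_dcoset:
  assumes "x \<in> D" "x' \<in> D" "l \<in> carrier L" "l' \<in> carrier L" "over_block x l r1 r2" "over_block x' l' r1 r2"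
  shows "x = x'"
proof -
  have "r1 \<in> carrier L" "r2 \<in> carrier L"
    using V.lr_props[of l] W.lr_props[of "l \<otimes> x"] assms D_closed by (auto simp: over_block_def)
  then have "\<exists>!z\<in>D. inv r1 \<otimes> r2 \<in> dcoset L V.Lg z W.Lg"
    using double_coset_reps by (simp add: dcoset_reps_def)
  then show ?thesis using assms over_block_dcoset D_closed by blast
qed

lemma over_block_iff:
  assumes x: "x \<in> carrier L" and l: "l \<in> carrier L" and l': "l' \<in> carrier L" and ob: "over_block x l r1 r2"
  shows "over_block x l' r1 r2 \<longleftrightarrow> inv l \<otimes> l' \<in> Kx x"
proof
  assume ob': "over_block x l' r1 r2"
  have lx: "l \<otimes> x \<in> carrier L" "l' \<otimes> x \<in> carrier L" using l l' x by auto
  have r: "r1 \<in> carrier L" "r2 \<in> carrier L"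
    using V.lr_props[OF l] W.lr_props[OF lx(1)] ob by (auto simp: over_block_def)
  have "inv r1 \<otimes> l \<in> V.Lg" "inv r1 \<otimes> l' \<in> V.Lg" "inv r2 \<otimes> (l \<otimes> x) \<in> W.Lg" "inv r2 \<otimes> (l' \<otimes> x) \<in> W.Lg"
    using V.lr_props[OF l] V.lr_props[OF l'] W.lr_props[OF lx(1)] W.lr_props[OF lx(2)] ob ob'
    by (auto simp: over_block_def)
  then have "inv l \<otimes> l' \<in> V.Lg" "inv (l \<otimes> x) \<otimes> (l' \<otimes> x) \<in> W.Lg"
    using V.T.inv_mult_mem_S_trans[OF l r(1) l' V.T.inv_mult_mem_S_sym[OF r(1) l]]
      W.T.inv_mult_mem_S_trans[OF lx(1) r(2) lx(2) W.T.inv_mult_mem_S_sym[OF r(2) lx(1)]] by auto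
  moreover have "inv (l \<otimes> x) \<otimes> (l' \<otimes> x) = inv x \<otimes> (inv l \<otimes> l') \<otimes> x"
    using l l' x by (simp add: L.inv_mult_group L.m_assoc)
  ultimately show "inv l \<otimes> l' \<in> Kx x"
    using conj_mem_stab_iff[OF x gj_closed, of "inv l \<otimes> l'"] l l' by simp
next
  assume k: "inv l \<otimes> l' \<in> Kx x"
  have "V.lr l' = V.lr l"
    using V.T.lrep_mult_S[of l "inv l \<otimes> l'"] l l' k by simp
  moreover have "l \<otimes> x \<otimes> (inv x \<otimes> (inv l \<otimes> l') \<otimes> x) = l' \<otimes> x"
    using l l' x by (simp add: L.m_assoc)
  then have "W.lr (l' \<otimes> x) = W.lr (l \<otimes> x)"
    using W.T.lrep_mult_S[of "l \<otimes> x" "inv x \<otimes> (inv l \<otimes> l') \<otimes> x"] conj_mem_stab[OF x k] l x by simp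
  ultimately show "over_block x l' r1 r2" using ob by (simp add: over_block_def)
qed

lemma over_block_exists:
  assumes r1: "r1 \<in> V.R" and r2: "r2 \<in> W.R"
  obtains x l where "x \<in> D" "l \<in> carrier L" "over_block x l r1 r2"
proof -
  have r: "r1 \<in> carrier L" "r2 \<in> carrier L" using r1 r2 V.T.ltrans_closed W.T.ltrans_closed by auto
  then have "\<exists>x\<in>D. inv r1 \<otimes> r2 \<in> dcoset L V.Lg x W.Lg"
    using double_coset_reps unfolding dcoset_reps_def by blast
  then obtain x where x: "x \<in> D" "inv r1 \<otimes> r2 \<in> dcoset L V.Lg x W.Lg" ..
  then obtain a b where ab: "a \<in> V.Lg" "b \<in> W.Lg" "inv r1 \<otimes> r2 = a \<otimes> x \<otimes> b"
    unfolding dcoset_def by blast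
  have c: "a \<in> carrier L" "b \<in> carrier L" "x \<in> carrier L" using ab x D_closed stab_closed by auto
  have "r1 \<otimes> a \<otimes> x = r2 \<otimes> inv b"
    using ab(3) r c by (simp add: L.m_assoc L.inv_solve_left)
      (metis L.inv_closed L.inv_solve_left L.m_assoc L.m_closed L.r_inv L.r_one)
  then have ob: "over_block x (r1 \<otimes> a) r1 r2"
    using V.T.lrep_unique[OF _ r1] W.T.lrep_unique[OF _ r2] r c ab stab_inv[OF gj_closed ab(2)]
    by (simp add: over_block_def L.m_assoc[symmetric])
  show ?thesis using r c by (intro that[OF x(1) _ ob]) simp
qed

definition block_triple :: "'l \<Rightarrow> 'l \<Rightarrow> 'l \<Rightarrow> 'l \<Rightarrow> 'l \<Rightarrow> bool" where
  "block_triple r1 r2 x r t \<longleftrightarrow> x \<in> D \<and> r \<in> ltrans L (carrier L) (Lx x) \<and> t \<in> ltrans L (Lx x) (Kx x)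
     \<and> over_block x (r \<otimes> t) r1 r2"

lemma block_triple_closed:
  assumes "block_triple r1 r2 x r t"
  shows "x \<in> carrier L" "r \<in> carrier L" "t \<in> Lx x" "t \<in> carrier L"
proof -
  show x: "x \<in> carrier L" using assms D_closed by (auto simp: block_triple_def)
  interpret S: induction_in_stages L G act \<sigma> \<tau> "gprod x" "Kx x" BX "tens_res x"
    by (rule induction_in_stages_summand[OF x])
  show "r \<in> carrier L" "t \<in> Lx x" "t \<in> carrier L"
    using assms S.U.T.ltrans_closed S.K.ltrans_subset S.K.T_closed by (auto simp: block_triple_def)
qed

lemma block_triple_exists:
  assumes r1: "r1 \<in> V.R" and r2: "r2 \<in> W.R"
  obtains x r t where "block_triple r1 r2 x r t"
proof -
  obtain x l where x: "x \<in> D" and l: "l \<in> carrier L" and ob: "over_block x l r1 r2"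
    using over_block_exists[OF r1 r2] .
  have xc: "x \<in> carrier L" using D_closed[OF x] .
  interpret S: induction_in_stages L G act \<sigma> \<tau> "gprod x" "Kx x" BX "tens_res x"
    by (rule induction_in_stages_summand[OF xc])
  define r where "r = S.U.lr l"
  define t where "t = lrep L (Lx x) (Kx x) (inv r \<otimes> l)"
  have r: "r \<in> S.U.R" "r \<in> carrier L" "inv r \<otimes> l \<in> Lx x"
    using S.U.lr_props[OF l] unfolding r_def by auto
  have t: "t \<in> S.K.R" "t \<in> carrier L" "inv t \<otimes> (inv r \<otimes> l) \<in> Kx x"
    using S.K.lrep_mem[OF r(3)] S.K.lrep_closed[OF r(3)] S.K.lrep_inv_mult_mem[OF r(3)] unfolding t_def by auto
  have "inv l \<otimes> (r \<otimes> t) = inv (inv t \<otimes> (inv r \<otimes> l))"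
    using l r t by (simp add: L.inv_mult_group L.m_assoc)
  then have "inv l \<otimes> (r \<otimes> t) \<in> Kx x"
    using t(3) stab_inv[OF gi_closed] stab_inv[of "act x gj"] gj_closed xc by auto
  then have "over_block x (r \<otimes> t) r1 r2" using over_block_iff[OF xc l _ ob] r t by simp
  then show ?thesis using that x r t by (simp add: block_triple_def)
qed

lemma block_triple_unique:
  assumes b: "block_triple r1 r2 x r t" and b': "block_triple r1 r2 x' r' t'"
  shows "x' = x \<and> r' = r \<and> t' = t"
proof -
  have x: "x \<in> D" "x \<in> carrier L" using b D_closed by (auto simp: block_triple_def)
  interpret S: induction_in_stages L G act \<sigma> \<tau> "gprod x" "Kx x" BX "tens_res x"
    by (rule induction_in_stages_summand[OF x(2)])
  have R: "r \<in> S.U.R" "t \<in> S.K.R" "r \<in> carrier L" "t \<in> Lx x" "t \<in> carrier L" and ob: "over_block x (r \<otimes> t) r1 r2"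
    using b S.U.T.ltrans_closed S.K.ltrans_subset S.K.T_closed by (auto simp: block_triple_def)
  have xx: "x' = x"
    using b b' block_triple_closed[OF b] block_triple_closed[OF b']
    by (intro over_block_unique_dcoset[of x' x "r' \<otimes> t'" "r \<otimes> t" r1 r2]) (auto simp: block_triple_def)
  then have R': "r' \<in> S.U.R" "t' \<in> S.K.R" "r' \<in> carrier L" "t' \<in> Lx x" "t' \<in> carrier L"
    and ob': "over_block x (r' \<otimes> t') r1 r2"
    using b' S.U.T.ltrans_closed S.K.ltrans_subset S.K.T_closed by (auto simp: block_triple_def)
  define k where "k = inv (r \<otimes> t) \<otimes> (r' \<otimes> t')"
  have k: "k \<in> Kx x" "k \<in> carrier L"
    using over_block_iff[OF x(2) _ _ ob] ob' R R' stab_closed unfolding k_def by auto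
  have tk: "t \<otimes> k \<in> Lx x" using R(4) k S.K.S_subset_T stab_mult[OF gprod_closed[OF x(2)]] by blast
  have rt': "r' \<otimes> t' = r \<otimes> (t \<otimes> k)" using R R' unfolding k_def by (simp add: L.m_assoc[symmetric])
  have rr: "r' = r"
    using S.U.T.lrep_mult_S[OF _ R'(4)] S.U.T.lrep_mult_S[OF _ tk] S.U.T.lrep_unique[OF _ R(1)]
      S.U.T.lrep_unique[OF _ R'(1)] R R' rt' tk
    by (metis L.inv_closed L.l_inv L.m_closed S.U.T.ltrans_closed stab_closed
        subgroup.one_closed[OF stab_subgroup[OF gprod_closed[OF x(2)]]])
  then have "inv t \<otimes> t' = k" using R R' unfolding k_def by (simp add: L.inv_mult_group L.m_assoc)
  then have "t' = t" using S.K.lrep_unique[OF R'(4) R(2)] S.K.lrep_unique[OF R'(4) R'(2)] k R'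
    by (metis L.l_inv S.K.T_closed S.K.subgroup_S subgroup.one_closed)
  then show ?thesis using xx rr by simp
qed

definition block_index :: "'l \<Rightarrow> 'l \<Rightarrow> 'l \<times> 'l \<times> 'l" where
  "block_index r1 r2 = (THE (x, r, t). block_triple r1 r2 x r t)"

lemma block_index_eq: "block_triple r1 r2 x r t \<Longrightarrow> block_index r1 r2 = (x, r, t)"
  unfolding block_index_def using block_triple_unique by (intro the_equality) auto

definition block_scalar :: "'l \<Rightarrow> 'l \<Rightarrow> 'l \<Rightarrow> 'k" where
  "block_scalar x r t = \<sigma> (act r (gprod x)) r t * mackey_scalar x (r \<otimes> t)
     * inverse (\<sigma> (act (r \<otimes> t) gi) (V.lr (r \<otimes> t)) (V.stab_part (r \<otimes> t)))
     * inverse (\<sigma> (act (r \<otimes> t \<otimes> x) gj) (W.lr (r \<otimes> t \<otimes> x)) (W.stab_part (r \<otimes> t \<otimes> x)))"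

lemma block_scalar_nonzero:
  assumes "x \<in> carrier L" "r \<in> carrier L" "t \<in> carrier L"
  shows "block_scalar x r t \<noteq> 0"
proof -
  have "r \<otimes> t \<in> carrier L" "r \<otimes> t \<otimes> x \<in> carrier L" using assms by auto
  then show ?thesis
    unfolding block_scalar_def using assms V.lr_props W.lr_props gprod_closed gi_closed gj_closed
    by (simp add: \<sigma>_nonzero mackey_scalar_nonzero stab_closed)
qed

lemma emb3_mem_fsp:
  assumes "block_triple r1 r2 x r t" "z \<in> fsp BX"
  shows "emb x (emb r (emb t z)) \<in> fsp BR"
proof -
  have "emb r (emb t z) \<in> fsp (BIx x)"
    using assms unfolding indH_basis_def Ux_basis_eq indT_basis_def block_triple_def
    by (intro fsp_emb) auto
  then have "emb x (emb r (emb t z)) \<in> fsp ({x} \<times> BIx x)" by (intro fsp_emb) auto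
  then show ?thesis by (rule fsp_mono) (use assms in \<open>auto simp: dsum_basis_def block_triple_def\<close>)
qed

lemma mackey_map_emb_block: "x \<in> D \<Longrightarrow> mackey_map (emb x w) = block_map x w"
  unfolding mackey_map_def
  by (rule ext, subst sum_eq_single[OF finite_D]) (auto simp: emb_def block_map_def linext_def)

lemma mackey_map_emb:
  assumes b: "block_triple r1 r2 x r t" and z: "z \<in> fsp BX"
  shows "mackey_map (emb x (emb r (emb t z))) = smul (\<sigma> (act r (gprod x)) r t) (mackey_vec x (r \<otimes> t) z)"
proof -
  note c = block_triple_closed[OF b]
  interpret S: induction_in_stages L G act \<sigma> \<tau> "gprod x" "Kx x" BX "tens_res x"
    by (rule induction_in_stages_summand[OF c(1)])
  have mm: "mackey_map (emb x w) = block_map x w" for w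
    using b by (simp add: mackey_map_emb_block block_triple_def)
  have "emb t z \<in> fsp S.BU" using b z by (auto simp: block_triple_def indT_basis_def intro: fsp_emb)
  moreover have "block_map x (emb r (emb t z)) = ind_family (gprod x) (mackey_vec x) r (emb t z)"
    using linext_dl_eq[OF lin_fsp_linear[OF S.lin_ind_family[where \<Psi> = "mackey_vec x", OF lin_mackey_vec[OF c(1)]]]]
      calculation c by (simp add: block_map_def linext_emb)
  ultimately show ?thesis
    using mm S.ind_family_emb[where \<Psi> = "mackey_vec x", OF lin_mackey_vec[OF c(1)] c(2,4) z] by simp
qed

lemma mackey_map_block:
  assumes bt: "block_triple r1 r2 x r t" and a: "a \<in> fsp BV" and b: "b \<in> fsp BW"
  shows "mackey_map (emb x (emb r (emb t (vt a b)))) = smul (block_scalar x r t)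
    (vt (emb r1 (\<rho>V (inv r1 \<otimes> (r \<otimes> t)) a)) (emb r2 (\<rho>W (inv r2 \<otimes> (r \<otimes> t \<otimes> x)) b)))"
  using mackey_map_emb[OF bt fsp_vt[OF a b]] mackey_vec_vt[OF _ _ a b] block_triple_closed[OF bt] bt
  by (simp add: V.ind_vec_def W.ind_vec_def block_scalar_def block_triple_def over_block_def
      vt_smul_left vt_smul_right smul_smul mult_ac)

definition block_inv :: "'l \<Rightarrow> 'l \<Rightarrow> ('b \<Rightarrow> 'k) \<Rightarrow> ('c \<Rightarrow> 'k) \<Rightarrow> 'l \<times> 'l \<times> 'l \<times> 'b \<times> 'c \<Rightarrow> 'k" where
  "block_inv r1 r2 a b = (case block_index r1 r2 of (x, r, t) \<Rightarrow>
     smul (inverse (block_scalar x r t)) (emb x (emb r (emb t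
       (vt (V.inv_action (inv r1 \<otimes> (r \<otimes> t)) a) (W.inv_action (inv r2 \<otimes> (r \<otimes> t \<otimes> x)) b))))))"

definition mackey_inv :: "(('l \<times> 'b) \<times> ('l \<times> 'c) \<Rightarrow> 'k) \<Rightarrow> 'l \<times> 'l \<times> 'l \<times> 'b \<times> 'c \<Rightarrow> 'k" where
  "mackey_inv = linext (\<lambda>((r1, v), (r2, w)). block_inv r1 r2 (dl v) (dl w))"

lemma block_triple_stab_parts:
  assumes "block_triple r1 r2 x r t"
  shows "inv r1 \<otimes> (r \<otimes> t) \<in> V.Lg" "inv r2 \<otimes> (r \<otimes> t \<otimes> x) \<in> W.Lg"
  using assms block_triple_closed[OF assms] V.lr_props[of "r \<otimes> t"] W.lr_props[of "r \<otimes> t \<otimes> x"]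
  by (auto simp: block_triple_def over_block_def)

lemma block_inv_eq:
  assumes "block_triple r1 r2 x r t"
  shows "block_inv r1 r2 a b = smul (inverse (block_scalar x r t)) (emb x (emb r (emb t
    (vt (V.inv_action (inv r1 \<otimes> (r \<otimes> t)) a) (W.inv_action (inv r2 \<otimes> (r \<otimes> t \<otimes> x)) b)))))"
  by (simp add: block_inv_def block_index_eq[OF assms])

lemma block_inv_mem_fsp:
  assumes r1: "r1 \<in> V.R" and r2: "r2 \<in> W.R" and a: "a \<in> fsp BV" and b: "b \<in> fsp BW"
  shows "block_inv r1 r2 a b \<in> fsp BR"
proof -
  obtain x r t where bt: "block_triple r1 r2 x r t" using block_triple_exists[OF r1 r2] .
  show ?thesis
    unfolding block_inv_eq[OF bt] using block_triple_stab_parts[OF bt] a b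
    by (intro fsp_smul emb3_mem_fsp[OF bt] fsp_vt V.inv_action_mem_fsp W.inv_action_mem_fsp)
qed

lemma fsp_bilinear_block_inv:
  assumes r1: "r1 \<in> V.R" and r2: "r2 \<in> W.R"
  shows "fsp_bilinear BV BW (block_inv r1 r2)"
proof -
  obtain x r t where bt: "block_triple r1 r2 x r t" using block_triple_exists[OF r1 r2] .
  show ?thesis
    unfolding block_inv_eq[OF bt] fsp_bilinear_def using block_triple_stab_parts[OF bt]
    by (intro conjI ballI fsp_linear_scale fsp_linear_emb fsp_linear_vt_left fsp_linear_vt_right
        V.fsp_linear_inv_action W.fsp_linear_inv_action)
qed

lemma fsp_linear_mackey_inv: "fsp_linear BM mackey_inv"
  unfolding mackey_inv_def by (rule fsp_linear_linext)

lemma mackey_inv_mem_fsp: "m \<in> fsp BM \<Longrightarrow> mackey_inv m \<in> fsp BR"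
  unfolding mackey_inv_def
  by (rule linext_mem_fsp) (auto simp: tensH_basis_def V.BI_eq W.BI_eq intro!: block_inv_mem_fsp)

lemma mackey_inv_vt_emb:
  assumes r1: "r1 \<in> V.R" and r2: "r2 \<in> W.R" and a: "a \<in> fsp BV" and b: "b \<in> fsp BW"
  shows "mackey_inv (vt (emb r1 a) (emb r2 b)) = block_inv r1 r2 a b"
  unfolding mackey_inv_def linext_vt_emb[OF a b] using linext_vt[OF fsp_bilinear_block_inv[OF r1 r2] a b]
  by simp

lemma mackey_map_inv_dl:
  assumes r1: "r1 \<in> V.R" and v: "v \<in> BV" and r2: "r2 \<in> W.R" and w: "w \<in> BW"
  shows "mackey_map (mackey_inv (dl ((r1, v), (r2, w)))) = dl ((r1, v), (r2, w))"
proof -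
  obtain x r t where bt: "block_triple r1 r2 x r t" using block_triple_exists[OF r1 r2] .
  note s = block_triple_stab_parts[OF bt] and c = block_triple_closed[OF bt]
  let ?a = "V.inv_action (inv r1 \<otimes> (r \<otimes> t)) (dl v)" and ?b = "W.inv_action (inv r2 \<otimes> (r \<otimes> t \<otimes> x)) (dl w)"
  have ab: "?a \<in> fsp BV" "?b \<in> fsp BW"
    using s v w by (auto intro: V.inv_action_mem_fsp W.inv_action_mem_fsp)
  have "mackey_map (mackey_inv (dl ((r1, v), (r2, w))))
      = smul (inverse (block_scalar x r t)) (mackey_map (emb x (emb r (emb t (vt ?a ?b)))))"
    by (simp add: mackey_inv_def block_inv_eq[OF bt]
        fsp_linear_smul[OF fsp_linear_mackey_map emb3_mem_fsp[OF bt fsp_vt[OF ab]]])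
  also have "\<dots> = dl ((r1, v), (r2, w))"
    using block_scalar_nonzero[OF c(1,2,4)] s v w
    by (simp add: mackey_map_block[OF bt ab] smul_smul V.module_inv_action W.module_inv_action emb_dl vt_dl)
  finally show ?thesis .
qed

lemma mackey_inv_map_dl:
  assumes x: "x \<in> D" and r: "r \<in> ltrans L (carrier L) (Lx x)" and t: "t \<in> ltrans L (Lx x) (Kx x)"
    and v: "v \<in> BV" and w: "w \<in> BW"
  shows "mackey_inv (mackey_map (dl (x, r, t, v, w))) = dl (x, r, t, v, w)"
proof -
  define r1 where "r1 = V.lr (r \<otimes> t)"
  define r2 where "r2 = W.lr (r \<otimes> t \<otimes> x)"
  have bt: "block_triple r1 r2 x r t" using x r t by (simp add: block_triple_def over_block_def r1_def r2_def)
  note s = block_triple_stab_parts[OF bt] and c = block_triple_closed[OF bt]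
  have R: "r1 \<in> V.R" "r2 \<in> W.R" using V.lr_props W.lr_props c by (simp_all add: r1_def r2_def)
  let ?a = "\<rho>V (inv r1 \<otimes> (r \<otimes> t)) (dl v)" and ?b = "\<rho>W (inv r2 \<otimes> (r \<otimes> t \<otimes> x)) (dl w)"
  have ab: "?a \<in> fsp BV" "?b \<in> fsp BW" using s v w by (auto intro: V.module_mem_fsp W.module_mem_fsp)
  have "mackey_map (dl (x, r, t, v, w)) = smul (block_scalar x r t) (vt (emb r1 ?a) (emb r2 ?b))"
    using mackey_map_block[OF bt fsp_dl[OF v] fsp_dl[OF w]] by (simp add: emb_dl vt_dl)
  moreover have "vt (emb r1 ?a) (emb r2 ?b) \<in> fsp BM"
    unfolding tensH_basis_def V.BI_eq W.BI_eq using R ab by (intro fsp_vt fsp_emb)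
  ultimately show ?thesis
    using block_scalar_nonzero[OF c(1,2,4)] s v w
    by (simp add: fsp_linear_smul[OF fsp_linear_mackey_inv] mackey_inv_vt_emb[OF R ab] block_inv_eq[OF bt]
        smul_smul V.inv_action_module W.inv_action_module emb_dl vt_dl)
qed

lemma mackey_map_inv: "m \<in> fsp BM \<Longrightarrow> mackey_map (mackey_inv m) = m"
  by (rule fsp_linear_eqI[OF fsp_linear_comp[OF fsp_linear_mackey_inv mackey_inv_mem_fsp fsp_linear_mackey_map] fsp_linear_id])
    (auto simp: tensH_basis_def V.BI_eq W.BI_eq mackey_map_inv_dl)

lemma mackey_inv_map: "v \<in> fsp BR \<Longrightarrow> mackey_inv (mackey_map v) = v"
  by (rule fsp_linear_eqI[OF fsp_linear_comp[OF fsp_linear_mackey_map mackey_map_mem_fsp fsp_linear_mackey_inv] fsp_linear_id])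
    (auto simp: dsum_basis_def indH_basis_def Ux_basis_eq indT_basis_def mackey_inv_map_dl)

theorem mackey_iso: "H_iso G L BM \<rho>M BR \<rho>R"
  unfolding H_iso_def
proof (intro exI conjI ballI)
  show "lin BM BR mackey_inv"
    by (simp add: lin_iff_fsp_linear fsp_linear_mackey_inv mackey_inv_mem_fsp)
  show "bij_betw mackey_inv (fsp BM) (fsp BR)"
    by (rule bij_betw_byWitness[where f' = mackey_map])
      (auto simp: mackey_map_inv mackey_inv_map mackey_inv_mem_fsp mackey_map_mem_fsp)
  fix k y and m :: "('l \<times> 'b) \<times> ('l \<times> 'c) \<Rightarrow> 'k"
  assume k: "k \<in> carrier G" and y: "y \<in> carrier L" and m: "m \<in> fsp BM"
  have "\<rho>M k y m = mackey_map (\<rho>R k y (mackey_inv m))"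
    using mackey_map_hom[OF k y mackey_inv_mem_fsp[OF m]] mackey_map_inv[OF m] by simp
  then show "mackey_inv (\<rho>M k y m) = \<rho>R k y (mackey_inv m)"
    using mackey_inv_map[OF dsum_action_mem_fsp[OF y mackey_inv_mem_fsp[OF m]]] by simp
qed

end

theorem theorem4p3:
  fixes G :: "'g monoid" and L :: "'l monoid" and act :: "'l \<Rightarrow> 'g \<Rightarrow> 'g"
    and \<sigma> :: "'g \<Rightarrow> 'l \<Rightarrow> 'l \<Rightarrow> 'k::field" and \<tau> :: "'g \<Rightarrow> 'g \<Rightarrow> 'l \<Rightarrow> 'k"
    and gi gj :: 'g and D :: "'l set"
    and BV :: "'b set" and \<rho>V :: "'l \<Rightarrow> ('b \<Rightarrow> 'k) \<Rightarrow> ('b \<Rightarrow> 'k)"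
    and BW :: "'c set" and \<rho>W :: "'l \<Rightarrow> ('c \<Rightarrow> 'k) \<Rightarrow> ('c \<Rightarrow> 'k)"
  assumes "alg_closed_field TYPE('k)"
    and "group G" and "finite (carrier G)"
    and "group L" and "finite (carrier L)"
    and "act_by_auts G L act"
    and "crossed_data G L act \<sigma> \<tau>"
    and "gi \<in> carrier G" and "gj \<in> carrier G"
    and "tw_mod L (stab L act gi) (\<sigma> gi) BV \<rho>V"
    and "tw_mod L (stab L act gj) (\<sigma> gj) BW \<rho>W"
    and "dcoset_reps L (stab L act gi) (stab L act gj) D"
  shows "H_iso G L
     (tensH_basis (indH_basis L act gi BV) (indH_basis L act gj BW))
     (tensH G \<tau> (indH G L act \<sigma> gi \<rho>V) (indH G L act \<sigma> gj \<rho>W))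
     (dsum_basis D (\<lambda>x. indH_basis L act (gi \<otimes>\<^bsub>G\<^esub> act x gj) (Ux_basis G L act gi gj BV BW x)))
     (dsum D (\<lambda>x. indH G L act \<sigma> (gi \<otimes>\<^bsub>G\<^esub> act x gj) (Ux G L act \<sigma> \<tau> gi gj \<rho>V \<rho>W x)))"
proof -
  interpret mackey_setting L G act \<sigma> \<tau> gi gj BV \<rho>V BW \<rho>W D
    using assms by (intro mackey_setting.intro crossed_product.intro crossed_product_axioms.intro
        mackey_setting_axioms.intro) auto
  show ?thesis by (rule mackey_iso)
qed

end
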